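(* Let $(X,d)$, $(\Lambda,d_\Lambda)$ be compact metric spaces, $\tau:\Lambda\times X\to X$ continuous and $q:X\to\mathcal P(\Lambda)$ continuous. Assume: (M1) there is $s>0$ such that $\int_\Lambda|f(\tau(\lambda,x))-f(\tau(\lambda,y))|\,dq_x(\lambda)\le s\,d(x,y)$ for all $x,y\in X$ and all $f\in\mathrm{Lip}_1(X)$; (H2) there is $r\ge0$ with $d(\tau(\lambda_1,x),\tau(\lambda_2,x))\le r\,d_\Lambda(\lambda_1,\lambda_2)$ for all $\lambda_1,\lambda_2\in\Lambda$, $x\in X$; (H3) there is $t\ge0$ with $d_{MK}(q_x,q_y)\le t\,d(x,y)$ for all $x,y\in X$; and suppose $s+rt<1$. Then there exists a unique probability $\mu_{\mathcal R}\in\mathcal P(X)$ with $T_q(\mu_{\mathcal R})=\mu_{\mathcal R}$, and for every $\mu_0\in\mathcal P(X)$, $T_q^k(\mu_0)\to\mu_{\mathcal R}$ exponentially fast in the Monge–Kantorovich distance.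
   Context: $\mathcal{P}(Y)$ is the set of Borel probability measures on a compact metric space $Y$, with $d_{MK}(\mu,\nu)=\sup_{f\in \mathrm{Lip}_1(Y)}\{\int f\,d\mu-\int f\,d\nu\}$, where $\mathrm{Lip}_1(Y)$ is the set of real $1$-Lipschitz functions on $Y$. The Markov operator $T_q$ on $\mathcal P(X)$ is defined by $\int_X f\,dT_q(\mu)=\int_X\int_\Lambda f(\tau(\lambda,x))\,dq_x(\lambda)\,d\mu(x)$ for $f\in C(X)$; $T_q^k$ is its $k$-th iterate. *)

theory Defs
  imports "HOL-Analysis.Analysis" "HOL-Probability.Probability"
begin

definition Prob :: "'a::metric_space measure set" where
  "Prob = {M. prob_space M \<and> sets M = sets borel}"

definition dMK :: "'a::metric_space measure \<Rightarrow> 'a measure \<Rightarrow> real" where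
  "dMK \<mu> \<nu> = (SUP f \<in> {f :: 'a \<Rightarrow> real. 1-lipschitz_on UNIV f}.
                 (\<integral>x. f x \<partial>\<mu>) - (\<integral>x. f x \<partial>\<nu>))"

text \<open>Markov operator: the Borel probability measure determined (Riesz) by
  its integrals against continuous functions.\<close>
definition Tq :: "('a::metric_space \<Rightarrow> 'b::metric_space measure) \<Rightarrow> ('b \<Rightarrow> 'a \<Rightarrow> 'a)
                  \<Rightarrow> 'a measure \<Rightarrow> 'a measure" where
  "Tq q \<tau> \<mu> = (THE \<nu>. \<nu> \<in> Prob \<and>
      (\<forall>f :: 'a \<Rightarrow> real. continuous_on UNIV f \<longrightarrow>
         (\<integral>x. f x \<partial>\<nu>) = (\<integral>x. (\<integral>l. f (\<tau> l x) \<partial>(q x)) \<partial>\<mu>)))"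

end

theory Submission
  imports Defs
begin

text \<open>
  For a \<open>1\<close>-Lipschitz \<open>f\<close>, the function \<open>x \<mapsto> \<integral> f (\<tau> \<lambda> x) dq\<^sub>x(\<lambda>)\<close> is
  \<open>(s + r t)\<close>-Lipschitz: (M1) controls the change of the integrand and (H2), (H3) the change of
  the measure \<open>q\<^sub>x\<close>. As \<open>T\<^sub>q\<close> acts on integrals by this transfer, it contracts the
  Monge--Kantorovich distance by the factor \<open>s + r t < 1\<close>, and Banach's argument gives the unique
  fixed point and the geometric rate. Completeness of the Monge--Kantorovich distance is shown by
  hand: along a geometrically Cauchy sequence the integrals of Lipschitz functions converge, hence
  by Stone--Weierstrass those of all continuous functions, and the limit functional is a measure by
  the Riesz representation theorem, proved here for compact metric spaces by Rudin's outer-measure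
  construction. The same theorem shows that \<open>T\<^sub>q\<close> is well defined.
\<close>

section \<open>Riesz representation on compact metric spaces\<close>

lemma compact_UNIV_continuous_bounded:
  fixes f :: "'a::metric_space \<Rightarrow> real"
  assumes "compact (UNIV :: 'a set)" "continuous_on UNIV f"
  obtains B where "B > 0" "\<And>x. \<bar>f x\<bar> \<le> B"
proof -
  have "bounded (range f)"
    using compact_continuous_image[OF assms(2,1)] by (rule compact_imp_bounded)
  then show thesis
    using that unfolding bounded_pos by auto
qed

lemma continuous_on_borel_measurable_sets_borel:
  fixes f :: "'a::topological_space \<Rightarrow> 'b::topological_space"
  assumes "sets M = sets borel" "continuous_on UNIV f"
  shows "f \<in> borel_measurable M"
  using borel_measurable_continuous_onI[OF assms(2)] measurable_cong_sets[OF assms(1) refl] by blast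

lemma compact_UNIV_continuous_integrable:
  fixes f :: "'a::metric_space \<Rightarrow> real"
  assumes "compact (UNIV :: 'a set)" "finite_measure M" "sets M = sets borel" "continuous_on UNIV f"
  shows "integrable M f"
proof -
  interpret finite_measure M by fact
  obtain B where "\<And>x. \<bar>f x\<bar> \<le> B"
    using compact_UNIV_continuous_bounded[OF assms(1,4)] by blast
  moreover have "f \<in> borel_measurable M"
    using assms(3,4) by (rule continuous_on_borel_measurable_sets_borel)
  ultimately show ?thesis
    by (intro integrable_const_bound[where B=B]) auto
qed

definition subordinate :: "('a::topological_space \<Rightarrow> real) \<Rightarrow> 'a set \<Rightarrow> bool" where
  "subordinate f U \<longleftrightarrow> continuous_on UNIV f \<and> (\<forall>x. 0 \<le> f x \<and> f x \<le> 1) \<and>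
     (\<exists>K. closed K \<and> K \<subseteq> U \<and> (\<forall>x. x \<notin> K \<longrightarrow> f x = 0))"

lemma subordinate_zero: "subordinate (\<lambda>x. 0) U"
  unfolding subordinate_def by auto

lemma subordinate_cutoff:
  fixes A U :: "'a::metric_space set"
  assumes "closed A" "open U" "A \<subseteq> U"
  obtains h D where "subordinate h U" "closed D" "D \<inter> A = {}" "\<And>x. x \<notin> D \<Longrightarrow> h x = 1"
proof -
  have "normal_space (euclidean :: 'a topology)"
    by (simp add: metrizable_imp_normal_space metrizable_space_euclidean)
  moreover have "disjnt A (- U)"
    using assms(3) by (auto simp: disjnt_def)
  ultimately obtain g where g: "continuous_map euclidean (top_of_set {0..1}) g"
    "g ` A \<subseteq> {0}" "g ` (- U) \<subseteq> {1::real}"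
    using Urysohn_lemma[of euclidean A "- U" 0 1] assms by (auto simp: closed_Compl)
  then have gc: "continuous_on UNIV g" and g0: "\<And>x. x \<in> A \<Longrightarrow> g x = 0"
    and g1: "\<And>x. x \<notin> U \<Longrightarrow> g x = 1"
    by (auto simp: continuous_map_in_subtopology image_subset_iff)
  define h where "h x = min 1 (max 0 (2 - 3 * g x))" for x
  have "subordinate h U"
    unfolding subordinate_def
  proof (intro conjI allI exI impI)
    show "continuous_on UNIV h"
      unfolding h_def by (intro continuous_intros gc)
    show "closed {x. 3 * g x \<le> 2}"
      by (intro closed_Collect_le continuous_intros gc)
    show "{x. 3 * g x \<le> 2} \<subseteq> U"
    proof
      fix x assume "x \<in> {x. 3 * g x \<le> 2}"
      then show "x \<in> U"
        using g1[of x] by (cases "x \<in> U") auto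
    qed
  qed (auto simp: h_def)
  moreover have "closed {x. 1 \<le> 3 * g x}"
    by (intro closed_Collect_le continuous_intros gc)
  moreover have "{x. 1 \<le> 3 * g x} \<inter> A = {}"
    using g0 by auto
  moreover have "h x = 1" if "x \<notin> {x. 1 \<le> 3 * g x}" for x
    using that by (simp add: h_def)
  ultimately show thesis
    by (rule that)
qed

lemma subordinate_split:
  fixes f :: "'a::metric_space \<Rightarrow> real"
  assumes f: "subordinate f (U \<union> V)" and "open U" "open V"
  obtains f1 f2 where "subordinate f1 U" "subordinate f2 V" "f = (\<lambda>x. f1 x + f2 x)"
proof -
  obtain K where K: "closed K" "K \<subseteq> U \<union> V" "\<And>x. x \<notin> K \<Longrightarrow> f x = 0"
    and fc: "continuous_on UNIV f" and f01: "\<And>x. 0 \<le> f x \<and> f x \<le> 1"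
    using f unfolding subordinate_def by blast
  have "closed (K - V)" "K - V \<subseteq> U"
    using K \<open>open V\<close> by auto
  then obtain h D where h: "subordinate h U" and D: "closed D" "D \<inter> (K - V) = {}"
    and h1: "\<And>x. x \<notin> D \<Longrightarrow> h x = 1"
    using subordinate_cutoff \<open>open U\<close> by blast
  obtain C where C: "closed C" "C \<subseteq> U" "\<And>x. x \<notin> C \<Longrightarrow> h x = 0"
    and hc: "continuous_on UNIV h" and h01: "\<And>x. 0 \<le> h x \<and> h x \<le> 1"
    using h unfolding subordinate_def by blast
  show thesis
  proof
    show "subordinate (\<lambda>x. f x * h x) U"
      unfolding subordinate_def
    proof (intro conjI allI exI[of _ C] impI)
      show "continuous_on UNIV (\<lambda>x. f x * h x)"
        by (intro continuous_on_mult fc hc)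
    qed (use C f01 h01 in \<open>auto simp: mult_le_one\<close>)
    show "subordinate (\<lambda>x. f x * (1 - h x)) V"
      unfolding subordinate_def
    proof (intro conjI allI exI[of _ "K \<inter> D"] impI)
      show "continuous_on UNIV (\<lambda>x. f x * (1 - h x))"
        by (intro continuous_on_mult continuous_on_diff continuous_on_const fc hc)
    qed (use K D h1 f01 h01 in \<open>auto simp: mult_le_one\<close>)
    show "f = (\<lambda>x. f x * h x + f x * (1 - h x))"
      by (simp add: algebra_simps)
  qed
qed

lemma subordinate_add:
  assumes f: "subordinate f U" and K: "closed K" "K \<subseteq> U" "\<And>x. x \<notin> K \<Longrightarrow> f x = 0"
    and g: "subordinate g (U - K)"
  shows "subordinate (\<lambda>x. f x + g x) U"
proof -
  obtain Kg where Kg: "closed Kg" "Kg \<subseteq> U - K" "\<And>x. x \<notin> Kg \<Longrightarrow> g x = 0"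
    using g unfolding subordinate_def by blast
  have f01: "0 \<le> f x \<and> f x \<le> 1" and g01: "0 \<le> g x \<and> g x \<le> 1" for x
    using f g unfolding subordinate_def by blast+
  have "f x + g x \<le> 1" for x
  proof (cases "x \<in> K")
    case True
    then have "g x = 0" using Kg by blast
    then show ?thesis using f01[of x] by simp
  next
    case False
    then show ?thesis using K(3) g01[of x] by simp
  qed
  moreover have "continuous_on UNIV (\<lambda>x. f x + g x)"
    using f g unfolding subordinate_def by (intro continuous_on_add) blast+
  moreover have "closed (K \<union> Kg)" "K \<union> Kg \<subseteq> U" "\<forall>x. x \<notin> K \<union> Kg \<longrightarrow> f x + g x = 0"
    using K Kg by auto
  ultimately show ?thesis
    unfolding subordinate_def using f01 g01 by (meson add_nonneg_nonneg)
qed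

lemma sum_unit_slices:
  assumes "(0::real) \<le> t"
  shows "(\<Sum>i<m. min 1 (max 0 (t - real i))) = min t (real m)"
  using assms by (induction m) (auto simp: min_def max_def)

locale normalized_positive_functional =
  fixes L :: "('a::metric_space \<Rightarrow> real) \<Rightarrow> real"
  assumes compact_space: "compact (UNIV :: 'a set)"
    and L_add: "\<And>f g. continuous_on UNIV f \<Longrightarrow> continuous_on UNIV g \<Longrightarrow>
                  L (\<lambda>x. f x + g x) = L f + L g"
    and L_scale: "\<And>f c. continuous_on UNIV f \<Longrightarrow> L (\<lambda>x. c * f x) = c * L f"
    and L_mono: "\<And>f g. continuous_on UNIV f \<Longrightarrow> continuous_on UNIV g \<Longrightarrow>
                  (\<And>x. f x \<le> g x) \<Longrightarrow> L f \<le> L g"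
    and L_one: "L (\<lambda>x. 1) = 1"
begin

lemma L_const: "L (\<lambda>x. c) = c"
  using L_scale[of "\<lambda>x. 1" c] L_one by simp

lemma L_nonneg: "continuous_on UNIV f \<Longrightarrow> (\<And>x. 0 \<le> f x) \<Longrightarrow> 0 \<le> L f"
  using L_mono[of "\<lambda>x. 0" f] L_const[of 0] by auto

lemma L_sum:
  assumes "finite I" "\<And>i. i \<in> I \<Longrightarrow> continuous_on UNIV (g i)"
  shows "L (\<lambda>x. \<Sum>i\<in>I. g i x) = (\<Sum>i\<in>I. L (g i))"
  using assms
proof (induction I rule: finite_induct)
  case empty
  then show ?case using L_const[of 0] by simp
next
  case (insert a I)
  then have "L (\<lambda>x. g a x + (\<Sum>i\<in>I. g i x)) = L (g a) + L (\<lambda>x. \<Sum>i\<in>I. g i x)"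
    by (intro L_add continuous_on_sum) auto
  with insert show ?case by simp
qed

definition inner_content :: "'a set \<Rightarrow> ennreal" where
  "inner_content U = (SUP f\<in>{f. subordinate f U}. ennreal (L f))"

definition outer_content :: "'a set \<Rightarrow> ennreal" where
  "outer_content A = (INF U\<in>{U. open U \<and> A \<subseteq> U}. inner_content U)"

lemma subordinate_le_inner_content: "subordinate f U \<Longrightarrow> ennreal (L f) \<le> inner_content U"
  unfolding inner_content_def by (rule SUP_upper) auto

lemma inner_content_mono: "U \<subseteq> V \<Longrightarrow> inner_content U \<le> inner_content V"
  unfolding inner_content_def subordinate_def by (rule SUP_subset_mono) blast+

lemma inner_content_le_1: "inner_content U \<le> 1"
  unfolding inner_content_def
proof (rule SUP_least)
  fix f assume "f \<in> {f. subordinate f U}"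
  then have "L f \<le> L (\<lambda>x. 1)"
    unfolding subordinate_def by (intro L_mono) auto
  then show "ennreal (L f) \<le> 1"
    using L_one by simp
qed

lemma inner_content_empty: "inner_content {} = 0"
proof -
  have "inner_content {} \<le> 0"
    unfolding inner_content_def
  proof (rule SUP_least)
    fix f assume "f \<in> {f. subordinate f ({} :: 'a set)}"
    then have "f = (\<lambda>x. 0)"
      unfolding subordinate_def by auto
    then show "ennreal (L f) \<le> 0"
      using L_const[of 0] by simp
  qed
  then show ?thesis by simp
qed

lemma inner_content_UNIV: "inner_content UNIV = 1"
proof (rule antisym[OF inner_content_le_1])
  have "subordinate (\<lambda>x. 1) UNIV"
    unfolding subordinate_def by auto
  then have "ennreal (L (\<lambda>x. 1)) \<le> inner_content UNIV"
    by (rule subordinate_le_inner_content)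
  then show "1 \<le> inner_content UNIV"
    using L_one by simp
qed

lemma inner_content_Un:
  assumes "open U" "open V"
  shows "inner_content (U \<union> V) \<le> inner_content U + inner_content V"
  unfolding inner_content_def[of "U \<union> V"]
proof (rule SUP_least)
  fix f assume "f \<in> {f. subordinate f (U \<union> V)}"
  then have "subordinate f (U \<union> V)" by simp
  then obtain f1 f2 where f1: "subordinate f1 U" and f2: "subordinate f2 V"
    and f: "f = (\<lambda>x. f1 x + f2 x)"
    using assms by (rule subordinate_split)
  have "L f = L f1 + L f2"
    using f1 f2 unfolding f subordinate_def by (intro L_add) auto
  moreover have "0 \<le> L f1" "0 \<le> L f2"
    using f1 f2 unfolding subordinate_def by (auto intro!: L_nonneg)
  ultimately have "ennreal (L f) = ennreal (L f1) + ennreal (L f2)"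
    by (simp add: ennreal_plus)
  also have "\<dots> \<le> inner_content U + inner_content V"
    using f1 f2 by (intro add_mono subordinate_le_inner_content)
  finally show "ennreal (L f) \<le> inner_content U + inner_content V" .
qed

lemma inner_content_finite_UN:
  assumes "\<And>i. open (U i)"
  shows "inner_content (\<Union>i<(n::nat). U i) \<le> (\<Sum>i<n. inner_content (U i))"
proof (induction n)
  case 0
  then show ?case by (simp add: inner_content_empty)
next
  case (Suc n)
  have "inner_content (\<Union>i<Suc n. U i) = inner_content (U n \<union> (\<Union>i<n. U i))"
    by (simp add: lessThan_Suc)
  also have "\<dots> \<le> inner_content (U n) + inner_content (\<Union>i<n. U i)"
    using assms by (intro inner_content_Un) auto
  also have "\<dots> \<le> inner_content (U n) + (\<Sum>i<n. inner_content (U i))"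
    using Suc by (rule add_left_mono)
  finally show ?case by (simp add: add.commute)
qed

text \<open>A function subordinate to \<open>\<Union>i. U i\<close> has compact support, hence is subordinate to
  finitely many of the \<open>U i\<close>.\<close>
lemma inner_content_UN:
  assumes U: "\<And>i. open (U i)"
  shows "inner_content (\<Union>i. U i) \<le> (\<Sum>i. inner_content (U i))"
  unfolding inner_content_def[of "\<Union>i. U i"]
proof (rule SUP_least)
  fix f assume "f \<in> {f. subordinate f (\<Union>i. U i)}"
  then obtain K where K: "closed K" "K \<subseteq> (\<Union>i. U i)" "\<And>x. x \<notin> K \<Longrightarrow> f x = 0"
    and f: "continuous_on UNIV f" "\<And>x. 0 \<le> f x \<and> f x \<le> 1"
    unfolding subordinate_def by blast
  have "compact K"
    using compact_Int_closed[OF compact_space K(1)] by simp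
  then obtain I where "finite I" "K \<subseteq> (\<Union>i\<in>I. U i)"
    using compactE_image[of K UNIV U] U K(2) by (metis UNIV_I)
  moreover obtain n where "I \<subseteq> {..<n}"
    using finite_nat_bounded[OF \<open>finite I\<close>] by blast
  ultimately have "K \<subseteq> (\<Union>i<n. U i)"
    by blast
  then have "subordinate f (\<Union>i<n. U i)"
    unfolding subordinate_def using f K(1,3) by blast
  then have "ennreal (L f) \<le> inner_content (\<Union>i<n. U i)"
    by (rule subordinate_le_inner_content)
  also have "\<dots> \<le> (\<Sum>i<n. inner_content (U i))"
    using U by (rule inner_content_finite_UN)
  also have "\<dots> \<le> (\<Sum>i. inner_content (U i))"
    by (rule sum_le_suminf) auto
  finally show "ennreal (L f) \<le> (\<Sum>i. inner_content (U i))" .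
qed

lemma outer_content_le_inner_content: "open U \<Longrightarrow> A \<subseteq> U \<Longrightarrow> outer_content A \<le> inner_content U"
  unfolding outer_content_def by (rule INF_lower) auto

lemma outer_content_open: "open U \<Longrightarrow> outer_content U = inner_content U"
  by (rule antisym[OF outer_content_le_inner_content])
    (auto simp: outer_content_def intro!: INF_greatest inner_content_mono)

lemma outer_content_mono: "A \<subseteq> B \<Longrightarrow> outer_content A \<le> outer_content B"
  unfolding outer_content_def by (rule INF_superset_mono) auto

lemma outer_content_le_1: "outer_content A \<le> 1"
  using outer_content_le_inner_content[of UNIV A] inner_content_UNIV by simp

lemma outer_content_empty: "outer_content {} = 0"
  using outer_content_le_inner_content[of "{}" "{}"] inner_content_empty by simp

lemma outer_content_UN: "outer_content (\<Union>i. A i) \<le> (\<Sum>i. outer_content (A i))"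
proof (rule ennreal_le_epsilon)
  fix e :: real assume e: "0 < e"
  define \<delta> where "\<delta> i = e * (1/2) ^ Suc i" for i
  have "\<forall>i. \<exists>U. open U \<and> A i \<subseteq> U \<and> inner_content U < outer_content (A i) + ennreal (\<delta> i)"
  proof
    fix i
    have "outer_content (A i) \<noteq> \<infinity>"
      using outer_content_le_1[of "A i"] by (auto simp: top_unique)
    moreover have "0 < \<delta> i"
      using e by (simp add: \<delta>_def)
    ultimately have "outer_content (A i) + 0 < outer_content (A i) + ennreal (\<delta> i)"
      by (simp only: ennreal_add_left_cancel_less) simp
    then have "outer_content (A i) < outer_content (A i) + ennreal (\<delta> i)"
      by simp
    then show "\<exists>U. open U \<and> A i \<subseteq> U \<and> inner_content U < outer_content (A i) + ennreal (\<delta> i)"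
      unfolding outer_content_def[of "A i"] by (simp add: INF_less_iff)
  qed
  then obtain U where "\<forall>i. open (U i) \<and> A i \<subseteq> U i \<and>
      inner_content (U i) < outer_content (A i) + ennreal (\<delta> i)"
    by (auto dest!: choice)
  then have U: "\<And>i. open (U i)" "\<And>i. A i \<subseteq> U i"
    "\<And>i. inner_content (U i) < outer_content (A i) + ennreal (\<delta> i)"
    by auto
  have "outer_content (\<Union>i. A i) \<le> inner_content (\<Union>i. U i)"
    using U(1,2) by (intro outer_content_le_inner_content) auto
  also have "\<dots> \<le> (\<Sum>i. inner_content (U i))"
    using U(1) by (rule inner_content_UN)
  also have "\<dots> \<le> (\<Sum>i. outer_content (A i) + ennreal (\<delta> i))"
    using U(3) by (intro suminf_le) (auto intro: less_imp_le)
  also have "\<dots> = (\<Sum>i. outer_content (A i)) + ennreal (\<Sum>i. \<delta> i)"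
    using e by (simp add: suminf_add[symmetric] suminf_ennreal2 \<delta>_def
        summable_mult sums_summable[OF power_half_series])
  also have "(\<Sum>i. \<delta> i) = e"
    using sums_mult[OF power_half_series, of e] by (simp add: sums_iff \<delta>_def)
  finally show "outer_content (\<Union>i. A i) \<le> (\<Sum>i. outer_content (A i)) + ennreal e" .
qed

lemma outer_content_Un: "outer_content (A \<union> B) \<le> outer_content A + outer_content B"
proof -
  define C where "C i = (if i = 0 then A else if i = 1 then B else {})" for i :: nat
  have "A \<union> B = (\<Union>i. C i)"
    unfolding C_def by (auto split: if_splits)
  then have "outer_content (A \<union> B) \<le> (\<Sum>i. outer_content (C i))"
    using outer_content_UN by simp
  also have "(\<Sum>i. outer_content (C i)) = (\<Sum>i\<in>{0,1}. outer_content (C i))"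
    by (rule suminf_finite) (auto simp: C_def outer_content_empty)
  also have "\<dots> = outer_content A + outer_content B"
    by (simp add: C_def)
  finally show ?thesis .
qed

lemma inner_content_add_complement:
  assumes U: "open U" and f: "subordinate f U" "closed K" "K \<subseteq> U" "\<And>x. x \<notin> K \<Longrightarrow> f x = 0"
  shows "ennreal (L f) + inner_content (U - K) \<le> inner_content U"
  unfolding inner_content_def[of "U - K"]
proof (subst ennreal_SUP_add_right)
  show "{g. subordinate g (U - K)} \<noteq> {}"
    using subordinate_zero by blast
  show "(SUP g\<in>{g. subordinate g (U - K)}. ennreal (L f) + ennreal (L g)) \<le> inner_content U"
  proof (rule SUP_least)
    fix g assume "g \<in> {g. subordinate g (U - K)}"
    then have g: "subordinate g (U - K)" by simp
    have "0 \<le> L f" "0 \<le> L g"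
      using f(1) g unfolding subordinate_def by (auto intro!: L_nonneg)
    then have "ennreal (L f) + ennreal (L g) = ennreal (L (\<lambda>x. f x + g x))"
      using f(1) g unfolding subordinate_def by (simp add: L_add ennreal_plus)
    also have "\<dots> \<le> inner_content U"
      by (intro subordinate_le_inner_content subordinate_add[OF f g])
    finally show "ennreal (L f) + ennreal (L g) \<le> inner_content U" .
  qed
qed

text \<open>Together with subadditivity this makes open sets Caratheodory measurable.\<close>
lemma outer_content_split:
  assumes V: "open V"
  shows "outer_content (A \<inter> V) + outer_content (A - V) \<le> outer_content A"
  unfolding outer_content_def[of A]
proof (rule INF_greatest)
  fix U assume "U \<in> {U. open U \<and> A \<subseteq> U}"
  then have U: "open U" "A \<subseteq> U" by auto
  have "outer_content (A \<inter> V) + outer_content (A - V) \<le> inner_content (U \<inter> V) + outer_content (A - V)"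
    using U V by (intro add_right_mono outer_content_le_inner_content) auto
  also have "\<dots> = (SUP f\<in>{f. subordinate f (U \<inter> V)}. ennreal (L f) + outer_content (A - V))"
    unfolding inner_content_def
    by (rule ennreal_SUP_add_left[symmetric]) (use subordinate_zero in blast)
  also have "\<dots> \<le> inner_content U"
  proof (rule SUP_least)
    fix f assume "f \<in> {f. subordinate f (U \<inter> V)}"
    then have f: "subordinate f (U \<inter> V)" by simp
    then obtain K where K: "closed K" "K \<subseteq> U \<inter> V" "\<And>x. x \<notin> K \<Longrightarrow> f x = 0"
      unfolding subordinate_def by blast
    have "subordinate f U"
      using f unfolding subordinate_def by blast
    have "outer_content (A - V) \<le> inner_content (U - K)"
      using U K by (intro outer_content_le_inner_content) (auto intro: open_Diff)
    then have "ennreal (L f) + outer_content (A - V) \<le> ennreal (L f) + inner_content (U - K)"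
      by (rule add_left_mono)
    also have "\<dots> \<le> inner_content U"
      using U(1) \<open>subordinate f U\<close> K by (intro inner_content_add_complement) auto
    finally show "ennreal (L f) + outer_content (A - V) \<le> inner_content U" .
  qed
  finally show "outer_content (A \<inter> V) + outer_content (A - V) \<le> inner_content U" .
qed

lemma open_in_lambda_system: "open V \<Longrightarrow> V \<in> lambda_system UNIV (Pow UNIV) outer_content"
  unfolding lambda_system_def
proof (intro CollectI conjI ballI)
  fix A :: "'a set" assume V: "open V"
  have "outer_content A \<le> outer_content (A \<inter> V) + outer_content (A - V)"
    using outer_content_Un[of "A \<inter> V" "A - V"] by (metis Int_Diff_Un)
  moreover have "V \<inter> A = A \<inter> V" "(UNIV - V) \<inter> A = A - V"
    by auto
  ultimately show "outer_content (V \<inter> A) + outer_content ((UNIV - V) \<inter> A) = outer_content A"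
    using outer_content_split[OF V, of A] by simp
qed simp

lemma outer_measure_space_outer_content: "outer_measure_space (Pow UNIV) outer_content"
  unfolding outer_measure_space_def positive_def increasing_def countably_subadditive_def
  by (auto simp: outer_content_empty outer_content_mono outer_content_UN)

definition riesz_measure :: "'a measure" where
  "riesz_measure = measure_of UNIV (sets borel) outer_content"

lemma
  shows sets_riesz_measure: "sets riesz_measure = sets borel"
    and space_riesz_measure: "space riesz_measure = UNIV"
  unfolding riesz_measure_def
  using sets.sets_measure_of_eq[of borel outer_content] sets.space_measure_of_eq[of borel outer_content]
  by simp_all

lemma emeasure_riesz_measure:
  assumes "A \<in> sets borel"
  shows "emeasure riesz_measure A = outer_content A"
proof -
  have ms: "measure_space UNIV (lambda_system UNIV (Pow UNIV) outer_content) outer_content"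
    using sigma_algebra.caratheodory_lemma[OF sigma_algebra_Pow outer_measure_space_outer_content]
    by simp
  then have "sigma_algebra UNIV (lambda_system UNIV (Pow UNIV) outer_content)"
    unfolding measure_space_def by simp
  then have "sets borel \<subseteq> lambda_system UNIV (Pow UNIV) outer_content"
    unfolding sets_borel using open_in_lambda_system
    by (intro sigma_algebra.sigma_sets_subset) auto
  then have "measure_space UNIV (sets borel) outer_content"
    using sets.sigma_algebra_axioms[of borel] by (intro measure_down[OF ms]) simp_all
  then show ?thesis
    unfolding riesz_measure_def measure_space_def
    using assms by (intro emeasure_measure_of_sigma) auto
qed

lemma prob_space_riesz_measure: "prob_space riesz_measure"
  by (rule prob_spaceI)
    (simp add: space_riesz_measure emeasure_riesz_measure outer_content_open inner_content_UNIV)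

lemma integrable_riesz_measure:
  fixes f :: "'a \<Rightarrow> real"
  assumes "continuous_on UNIV f"
  shows "integrable riesz_measure f"
  using compact_space prob_space.axioms(1)[OF prob_space_riesz_measure] sets_riesz_measure assms
  by (rule compact_UNIV_continuous_integrable)

lemma L_le_measure_closed:
  assumes K: "closed K" and g: "continuous_on UNIV g" "\<And>x. 0 \<le> g x \<and> g x \<le> 1"
    "\<And>x. x \<notin> K \<Longrightarrow> g x = 0"
  shows "L g \<le> measure riesz_measure K"
proof -
  interpret prob_space riesz_measure
    by (rule prob_space_riesz_measure)
  have "ennreal (L g) \<le> outer_content K"
    unfolding outer_content_def
  proof (rule INF_greatest)
    fix U assume "U \<in> {U. open U \<and> K \<subseteq> U}"
    then have "subordinate g U"
      unfolding subordinate_def using K g by blast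
    then show "ennreal (L g) \<le> inner_content U"
      by (rule subordinate_le_inner_content)
  qed
  also have "outer_content K = ennreal (measure riesz_measure K)"
    using K by (simp add: emeasure_riesz_measure[symmetric] emeasure_eq_measure)
  finally show ?thesis
    by simp
qed

text \<open>For every \<open>0 < z < 1\<close>, a function subordinate to the open set \<open>{g > z}\<close> is bounded by
  \<open>g / z\<close>.\<close>
lemma measure_closed_le_L:
  assumes K: "closed K" and g: "continuous_on UNIV g" "\<And>x. 0 \<le> g x"
    "\<And>x. x \<in> K \<Longrightarrow> 1 \<le> g x"
  shows "measure riesz_measure K \<le> L g"
proof (rule field_le_mult_one_interval)
  fix z :: real assume z: "0 < z" "z < 1"
  interpret prob_space riesz_measure
    by (rule prob_space_riesz_measure)
  define V where "V = {x. z < g x}"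
  have "open V"
    unfolding V_def by (intro open_Collect_less continuous_intros g)
  have "K \<subseteq> V"
    unfolding V_def using g(3) z by force
  have "ennreal (measure riesz_measure K) = emeasure riesz_measure K"
    by (rule emeasure_eq_measure[symmetric])
  also have "\<dots> \<le> emeasure riesz_measure V"
    using \<open>K \<subseteq> V\<close> \<open>open V\<close> by (intro emeasure_mono) (auto simp: sets_riesz_measure)
  also have "\<dots> = inner_content V"
    using \<open>open V\<close> by (simp add: emeasure_riesz_measure outer_content_open)
  also have "\<dots> \<le> ennreal (L g / z)"
    unfolding inner_content_def
  proof (rule SUP_least)
    fix h assume "h \<in> {h. subordinate h V}"
    then obtain Kh where hc: "continuous_on UNIV h" and h01: "\<And>x. 0 \<le> h x \<and> h x \<le> 1"
      and Kh: "Kh \<subseteq> V" "\<And>x. x \<notin> Kh \<Longrightarrow> h x = 0"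
      unfolding subordinate_def by blast
    have "h x \<le> (1 / z) * g x" for x
    proof (cases "x \<in> V")
      case True
      then have "1 < g x / z"
        using z unfolding V_def by (simp add: less_divide_eq)
      then show ?thesis
        using h01[of x] by simp
    next
      case False
      then have "h x = 0"
        using Kh by blast
      then show ?thesis
        using g(2)[of x] z by simp
    qed
    then have "L h \<le> L (\<lambda>x. (1 / z) * g x)"
      by (intro L_mono hc continuous_intros g)
    also have "\<dots> = L g / z"
      using L_scale[OF g(1), of "1 / z"] by simp
    finally show "ennreal (L h) \<le> ennreal (L g / z)"
      by (rule ennreal_leI)
  qed
  finally have "measure riesz_measure K \<le> L g / z"
    using L_nonneg[OF g(1,2)] z by simp
  then show "z * measure riesz_measure K \<le> L g"
    using z by (simp add: pos_le_divide_eq mult.commute)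
qed

lemma L_integral_riesz_measure_diff_le:
  assumes C: "closed C" "closed C'"
    and g: "continuous_on UNIV g" "\<And>x. 0 \<le> g x \<and> g x \<le> 1"
    and g0: "\<And>x. x \<notin> C \<Longrightarrow> g x = 0" and g1: "\<And>x. x \<in> C' \<Longrightarrow> g x = 1"
  shows "\<bar>L g - integral\<^sup>L riesz_measure g\<bar> \<le> measure riesz_measure C - measure riesz_measure C'"
proof -
  interpret prob_space riesz_measure
    by (rule prob_space_riesz_measure)
  have integrable_indicator: "integrable riesz_measure (indicator S :: 'a \<Rightarrow> real)"
    if "closed S" for S
    using that by (intro integrable_const_bound[where B=1] borel_measurable_indicator)
      (auto simp: sets_riesz_measure)
  have "integral\<^sup>L riesz_measure (indicator C') \<le> integral\<^sup>L riesz_measure g"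
    using g g1 by (intro integral_mono integrable_indicator C integrable_riesz_measure)
      (auto simp: indicator_def)
  moreover have "integral\<^sup>L riesz_measure g \<le> integral\<^sup>L riesz_measure (indicator C)"
    using g g0 by (intro integral_mono integrable_indicator C integrable_riesz_measure)
      (auto simp: indicator_def)
  moreover have "measure riesz_measure C' \<le> L g"
    using C g g1 by (intro measure_closed_le_L) auto
  moreover have "L g \<le> measure riesz_measure C"
    using C g g0 by (intro L_le_measure_closed) auto
  ultimately show ?thesis
    using C by (simp add: sets_riesz_measure)
qed

text \<open>Cut a \<open>[0, 1]\<close>-valued \<open>f\<close> into \<open>n\<close> horizontal slices \<open>g i\<close>; on each slice
  \<open>L\<close> and the integral differ by at most the measure of \<open>{i \<le> n f < i + 1}\<close>, and these
  errors telescope.\<close>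
lemma L_integral_riesz_measure_unit_diff_le:
  assumes f: "continuous_on UNIV f" "\<And>x. 0 \<le> f x \<and> f x \<le> 1" and n: "n > 0"
  shows "\<bar>L f - integral\<^sup>L riesz_measure f\<bar> \<le> 1 / real n"
proof -
  interpret prob_space riesz_measure
    by (rule prob_space_riesz_measure)
  define g where "g i x = min 1 (max 0 (real n * f x - real i))" for i x
  define K where "K i = {x. real i \<le> real n * f x}" for i
  have gc: "continuous_on UNIV (g i)" for i
    unfolding g_def by (intro continuous_intros f)
  have "f x = (1 / real n) * (\<Sum>i<n. g i x)" for x
  proof -
    have "(\<Sum>i<n. g i x) = min (real n * f x) (real n)"
      unfolding g_def using f(2)[of x] by (intro sum_unit_slices) simp
    also have "\<dots> = real n * f x"
      using f(2)[of x] by (simp add: mult_left_le)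
    finally show ?thesis
      using n by simp
  qed
  then have f_eq: "f = (\<lambda>x. (1 / real n) * (\<Sum>i<n. g i x))"
    by (rule ext)
  have "L f = (1 / real n) * L (\<lambda>x. \<Sum>i<n. g i x)"
    unfolding f_eq by (intro L_scale continuous_on_sum gc)
  also have "\<dots> = (1 / real n) * (\<Sum>i<n. L (g i))"
    using gc by (simp add: L_sum)
  finally have "L f = (1 / real n) * (\<Sum>i<n. L (g i))" .
  moreover have "integral\<^sup>L riesz_measure f = (1 / real n) * (\<Sum>i<n. integral\<^sup>L riesz_measure (g i))"
    unfolding f_eq using integrable_riesz_measure[OF gc] by simp
  ultimately have "\<bar>L f - integral\<^sup>L riesz_measure f\<bar> =
      (1 / real n) * \<bar>\<Sum>i<n. L (g i) - integral\<^sup>L riesz_measure (g i)\<bar>"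
    by (simp add: sum_subtractf diff_divide_distrib[symmetric])
  also have "\<dots> \<le> (1 / real n) * (\<Sum>i<n. measure riesz_measure (K i) - measure riesz_measure (K (Suc i)))"
  proof (intro mult_left_mono order_trans[OF sum_abs sum_mono])
    fix i
    show "\<bar>L (g i) - integral\<^sup>L riesz_measure (g i)\<bar> \<le>
        measure riesz_measure (K i) - measure riesz_measure (K (Suc i))"
    proof (rule L_integral_riesz_measure_diff_le)
      show "closed (K i)" "closed (K (Suc i))"
        unfolding K_def by (intro closed_Collect_le continuous_intros f)+
      show "continuous_on UNIV (g i)"
        by (rule gc)
      show "0 \<le> g i x \<and> g i x \<le> 1" for x
        by (simp add: g_def)
      show "x \<notin> K i \<Longrightarrow> g i x = 0" "x \<in> K (Suc i) \<Longrightarrow> g i x = 1" for x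
        by (simp_all add: g_def K_def)
    qed
  qed simp
  also have "\<dots> = (1 / real n) * (measure riesz_measure (K 0) - measure riesz_measure (K n))"
    by (simp only: sum_lessThan_telescope'[of "\<lambda>i. measure riesz_measure (K i)"])
  also have "\<dots> \<le> 1 / real n"
  proof -
    have "measure riesz_measure (K 0) - measure riesz_measure (K n) \<le> 1"
      using prob_le_1[of "K 0"] measure_nonneg[of riesz_measure "K n"] by linarith
    then show ?thesis
      using mult_left_le[of _ "1 / real n"] by simp
  qed
  finally show ?thesis .
qed

lemma integral_riesz_measure_unit:
  assumes "continuous_on UNIV f" "\<And>x. 0 \<le> f x \<and> f x \<le> 1"
  shows "integral\<^sup>L riesz_measure f = L f"
proof (rule ccontr)
  assume "integral\<^sup>L riesz_measure f \<noteq> L f"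
  then have "0 < \<bar>L f - integral\<^sup>L riesz_measure f\<bar>"
    by simp
  then obtain n where n: "n > 0" "inverse (real n) < \<bar>L f - integral\<^sup>L riesz_measure f\<bar>"
    using ex_inverse_of_nat_less by blast
  then show False
    using L_integral_riesz_measure_unit_diff_le[OF assms n(1)] by (simp add: inverse_eq_divide)
qed

lemma integral_riesz_measure:
  assumes f: "continuous_on UNIV f"
  shows "integral\<^sup>L riesz_measure f = L f"
proof -
  interpret prob_space riesz_measure
    by (rule prob_space_riesz_measure)
  obtain B where B: "B > 0" "\<And>x. \<bar>f x\<bar> \<le> B"
    using compact_UNIV_continuous_bounded[OF compact_space f] by blast
  define c where "c = 1 / (2 * B)"
  have c: "c > 0"
    unfolding c_def using B by simp
  define g where "g x = c * f x + 1 / 2" for x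
  have bound: "\<bar>c * f x\<bar> \<le> 1 / 2" for x
    using B c mult_left_mono[OF B(2)[of x], of c] by (simp add: c_def abs_mult)
  have "0 \<le> g x \<and> g x \<le> 1" for x
    using abs_le_D1[OF bound[of x]] abs_le_D2[OF bound[of x]] unfolding g_def by linarith
  then have "integral\<^sup>L riesz_measure g = L g"
    unfolding g_def by (intro integral_riesz_measure_unit continuous_intros f)
  moreover have "L g = c * L f + 1 / 2"
    unfolding g_def using f by (simp add: L_add L_scale L_const continuous_intros)
  moreover have "integral\<^sup>L riesz_measure g = c * integral\<^sup>L riesz_measure f + 1 / 2"
    unfolding g_def using integrable_riesz_measure[OF f] by (simp add: prob_space)
  ultimately show ?thesis
    using c by simp
qed

end

theorem riesz_representation:
  fixes L :: "('a::metric_space \<Rightarrow> real) \<Rightarrow> real"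
  assumes "normalized_positive_functional L"
  shows "\<exists>\<mu>\<in>Prob. \<forall>f. continuous_on UNIV f \<longrightarrow> integral\<^sup>L \<mu> f = L f"
proof -
  interpret normalized_positive_functional L
    by fact
  have "riesz_measure \<in> Prob"
    unfolding Prob_def using prob_space_riesz_measure sets_riesz_measure by simp
  then show ?thesis
    using integral_riesz_measure by blast
qed

section \<open>The Monge--Kantorovich distance\<close>

lemma
  assumes "\<mu> \<in> Prob"
  shows prob_space_Prob: "prob_space \<mu>"
    and sets_Prob: "sets \<mu> = sets borel"
  using assms unfolding Prob_def by auto

lemma integral_const_Prob:
  assumes "\<mu> \<in> Prob"
  shows "(\<integral>x. c \<partial>\<mu>) = (c::real)"
proof -
  interpret prob_space \<mu>
    using assms by (rule prob_space_Prob)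
  show ?thesis
    by (simp add: prob_space)
qed

lemma integrable_Prob:
  fixes f :: "'a::metric_space \<Rightarrow> real"
  assumes "compact (UNIV :: 'a set)" "\<mu> \<in> Prob" "continuous_on UNIV f"
  shows "integrable \<mu> f"
  using assms(1) prob_space.axioms(1)[OF prob_space_Prob[OF assms(2)]] sets_Prob[OF assms(2)] assms(3)
  by (rule compact_UNIV_continuous_integrable)

lemma integral_Prob_abs_diff_le:
  fixes f g :: "'a::metric_space \<Rightarrow> real"
  assumes "compact (UNIV :: 'a set)" "\<mu> \<in> Prob"
    and f: "continuous_on UNIV f" and g: "continuous_on UNIV g" and fg: "\<And>x. \<bar>f x - g x\<bar> \<le> e"
  shows "\<bar>(\<integral>x. f x \<partial>\<mu>) - (\<integral>x. g x \<partial>\<mu>)\<bar> \<le> e"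
proof -
  interpret prob_space \<mu>
    using assms(2) by (rule prob_space_Prob)
  have int: "integrable \<mu> f" "integrable \<mu> g"
    using integrable_Prob[OF assms(1,2)] f g by auto
  then have "\<bar>(\<integral>x. f x \<partial>\<mu>) - (\<integral>x. g x \<partial>\<mu>)\<bar> = \<bar>\<integral>x. f x - g x \<partial>\<mu>\<bar>"
    by simp
  also have "\<dots> \<le> (\<integral>x. \<bar>f x - g x\<bar> \<partial>\<mu>)"
    by (rule integral_abs_bound)
  also have "\<dots> \<le> (\<integral>x. e \<partial>\<mu>)"
    using int fg by (intro integral_mono) auto
  finally show ?thesis
    by (simp add: prob_space)
qed

lemma lipschitz_integral_diff_bounded:
  fixes f :: "'a::metric_space \<Rightarrow> real"
  assumes "compact (UNIV :: 'a set)" "\<mu> \<in> Prob" "\<nu> \<in> Prob" and f: "1-lipschitz_on UNIV f"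
    and D: "\<And>x y::'a. dist x y \<le> D"
  shows "(\<integral>x. f x \<partial>\<mu>) - (\<integral>x. f x \<partial>\<nu>) \<le> 2 * D"
proof -
  fix x0 :: 'a
  have bound: "\<bar>f x - f x0\<bar> \<le> D" for x
    using lipschitz_onD[OF f, of x x0] D[of x x0] by (simp add: dist_real_def)
  have "f x \<le> f x0 + D" "f x0 - D \<le> f x" for x
    using bound[of x] unfolding abs_le_iff by linarith+
  moreover have "integrable \<mu> f" "integrable \<nu> f"
    using integrable_Prob[OF assms(1)] assms(2,3) lipschitz_on_continuous_on[OF f] by auto
  moreover have "integrable \<mu> (\<lambda>x. c)" "integrable \<nu> (\<lambda>x. c)" for c :: real
    using prob_space_Prob[OF assms(2)] prob_space_Prob[OF assms(3)]
    by (auto intro: finite_measure.integrable_const prob_space.axioms(1))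
  ultimately have "(\<integral>x. f x \<partial>\<mu>) \<le> (\<integral>x. f x0 + D \<partial>\<mu>)" "(\<integral>x. f x0 - D \<partial>\<nu>) \<le> (\<integral>x. f x \<partial>\<nu>)"
    by (intro integral_mono; simp)+
  then show ?thesis
    using integral_const_Prob[OF assms(2), of "f x0 + D"] integral_const_Prob[OF assms(3), of "f x0 - D"]
    by linarith
qed

lemma integral_diff_le_dMK:
  fixes f :: "'a::metric_space \<Rightarrow> real"
  assumes "compact (UNIV :: 'a set)" "\<mu> \<in> Prob" "\<nu> \<in> Prob" and f: "1-lipschitz_on UNIV f"
  shows "(\<integral>x. f x \<partial>\<mu>) - (\<integral>x. f x \<partial>\<nu>) \<le> dMK \<mu> \<nu>"
  unfolding dMK_def
proof (rule cSUP_upper)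
  obtain D where D: "\<And>x y::'a. dist x y \<le> D"
    using compact_imp_bounded[OF assms(1)] unfolding bounded_two_points by auto
  show "bdd_above ((\<lambda>f. (\<integral>x. f x \<partial>\<mu>) - (\<integral>x. f x \<partial>\<nu>)) ` {f :: 'a \<Rightarrow> real. 1-lipschitz_on UNIV f})"
    using lipschitz_integral_diff_bounded[OF assms(1-3) _ D] by (intro bdd_aboveI2) simp
qed (use f in simp)

lemma dMK_le:
  fixes \<mu> \<nu> :: "'a::metric_space measure"
  assumes "\<And>f. 1-lipschitz_on UNIV f \<Longrightarrow> (\<integral>x. f x \<partial>\<mu>) - (\<integral>x. f x \<partial>\<nu>) \<le> c"
  shows "dMK \<mu> \<nu> \<le> c"
  unfolding dMK_def
proof (rule cSUP_least)
  have "1-lipschitz_on UNIV (\<lambda>x::'a. 0::real)"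
    by (rule lipschitz_onI) auto
  then show "{f :: 'a \<Rightarrow> real. 1-lipschitz_on UNIV f} \<noteq> {}"
    by blast
qed (use assms in auto)

lemma dMK_nonneg:
  assumes "compact (UNIV :: 'a::metric_space set)" "\<mu> \<in> Prob" "\<nu> \<in> Prob"
  shows "0 \<le> dMK \<mu> (\<nu> :: 'a measure)"
  using integral_diff_le_dMK[OF assms, of "\<lambda>x. 0"] by (simp add: lipschitz_onI)

lemma dMK_commute:
  assumes "compact (UNIV :: 'a::metric_space set)" "\<mu> \<in> Prob" "\<nu> \<in> Prob"
  shows "dMK \<mu> (\<nu> :: 'a measure) \<le> dMK \<nu> \<mu>"
proof (rule dMK_le)
  fix f :: "'a \<Rightarrow> real" assume "1-lipschitz_on UNIV f"
  then have "(\<integral>x. - f x \<partial>\<nu>) - (\<integral>x. - f x \<partial>\<mu>) \<le> dMK \<nu> \<mu>"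
    using assms by (intro integral_diff_le_dMK) auto
  then show "(\<integral>x. f x \<partial>\<mu>) - (\<integral>x. f x \<partial>\<nu>) \<le> dMK \<nu> \<mu>"
    by simp
qed

lemma dMK_sym:
  assumes "compact (UNIV :: 'a::metric_space set)" "\<mu> \<in> Prob" "\<nu> \<in> Prob"
  shows "dMK \<mu> (\<nu> :: 'a measure) = dMK \<nu> \<mu>"
  using dMK_commute[OF assms] dMK_commute[OF assms(1,3,2)] by (rule antisym)

lemma dMK_triangle:
  assumes "compact (UNIV :: 'a::metric_space set)" "\<mu> \<in> Prob" "\<nu> \<in> Prob" "\<rho> \<in> Prob"
  shows "dMK \<mu> (\<nu> :: 'a measure) \<le> dMK \<mu> \<rho> + dMK \<rho> \<nu>"
proof (rule dMK_le)
  fix f :: "'a \<Rightarrow> real" assume "1-lipschitz_on UNIV f"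
  then have "(\<integral>x. f x \<partial>\<mu>) - (\<integral>x. f x \<partial>\<rho>) \<le> dMK \<mu> \<rho>"
    "(\<integral>x. f x \<partial>\<rho>) - (\<integral>x. f x \<partial>\<nu>) \<le> dMK \<rho> \<nu>"
    using assms by (auto intro: integral_diff_le_dMK)
  then show "(\<integral>x. f x \<partial>\<mu>) - (\<integral>x. f x \<partial>\<nu>) \<le> dMK \<mu> \<rho> + dMK \<rho> \<nu>"
    by simp
qed

lemma lipschitz_integral_diff_le_dMK:
  fixes f :: "'a::metric_space \<Rightarrow> real"
  assumes "compact (UNIV :: 'a set)" "\<mu> \<in> Prob" "\<nu> \<in> Prob" and f: "K-lipschitz_on UNIV f"
  shows "(\<integral>x. f x \<partial>\<mu>) - (\<integral>x. f x \<partial>\<nu>) \<le> K * dMK \<mu> \<nu>"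
proof (cases "K = 0")
  case True
  fix x0
  have f_const: "f x = f x0" for x
    using lipschitz_onD[OF f, of x x0] True by simp
  have "(\<integral>x. f x \<partial>\<rho>) = f x0" if "\<rho> \<in> Prob" for \<rho>
  proof -
    have "(\<integral>x. f x \<partial>\<rho>) = (\<integral>x. f x0 \<partial>\<rho>)"
      by (rule Bochner_Integration.integral_cong[OF refl f_const])
    also have "\<dots> = f x0"
      by (rule integral_const_Prob[OF that])
    finally show ?thesis .
  qed
  then show ?thesis
    using assms(2,3) True by simp
next
  case False
  then have K: "K > 0"
    using lipschitz_on_nonneg[OF f] by simp
  then have "1-lipschitz_on UNIV (\<lambda>x. f x / K)"
    using lipschitz_on_cmult_real[OF f, of "1 / K"] by simp
  then have "(\<integral>x. f x / K \<partial>\<mu>) - (\<integral>x. f x / K \<partial>\<nu>) \<le> dMK \<mu> \<nu>"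
    using assms by (intro integral_diff_le_dMK)
  then show ?thesis
    using K by (simp add: diff_divide_distrib[symmetric] divide_le_eq mult.commute)
qed

lemma lipschitz_integral_abs_diff_le_dMK:
  fixes f :: "'a::metric_space \<Rightarrow> real"
  assumes "compact (UNIV :: 'a set)" "\<mu> \<in> Prob" "\<nu> \<in> Prob" and f: "K-lipschitz_on UNIV f"
  shows "\<bar>(\<integral>x. f x \<partial>\<mu>) - (\<integral>x. f x \<partial>\<nu>)\<bar> \<le> K * dMK \<mu> \<nu>"
  using lipschitz_integral_diff_le_dMK[OF assms] lipschitz_integral_diff_le_dMK[OF assms(1,3,2) f]
  unfolding dMK_sym[OF assms(1,3,2)] abs_le_iff by linarith

lemma integral_tendsto_measure_closed:
  fixes C :: "'a::metric_space set"
  assumes "\<mu> \<in> Prob" "closed C" "C \<noteq> {}"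
  shows "(\<lambda>n. \<integral>x. max 0 (1 - real n * infdist x C) \<partial>\<mu>) \<longlonglongrightarrow> measure \<mu> C"
proof -
  interpret prob_space \<mu>
    using assms(1) by (rule prob_space_Prob)
  have "(\<lambda>n. max 0 (1 - real n * infdist x C)) \<longlonglongrightarrow> indicator C x" for x
  proof (cases "x \<in> C")
    case True
    then show ?thesis
      by simp
  next
    case False
    then have "infdist x C > 0"
      using infdist_pos_not_in_closed assms(2,3) by blast
    then have "eventually (\<lambda>n. max 0 (1 - real n * infdist x C) = 0) sequentially"
      using eventually_sequentiallyI[of "nat \<lceil>1 / infdist x C\<rceil>"]
      by (auto simp: field_simps nat_le_iff ceiling_le_iff)
    then show ?thesis
      using False by (simp add: tendsto_eventually)
  qed
  moreover have "C \<in> sets \<mu>"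
    using assms(2) sets_Prob[OF assms(1)] by simp
  moreover have "(\<lambda>x. max 0 (1 - real n * infdist x C)) \<in> borel_measurable \<mu>" for n
    using sets_Prob[OF assms(1)]
    by (rule continuous_on_borel_measurable_sets_borel) (intro continuous_intros)
  ultimately have "(\<lambda>n. \<integral>x. max 0 (1 - real n * infdist x C) \<partial>\<mu>) \<longlonglongrightarrow> (\<integral>x. indicator C x \<partial>\<mu>)"
    by (intro integral_dominated_convergence[where w="\<lambda>x. 1"]) (auto simp: infdist_nonneg)
  then show ?thesis
    using \<open>C \<in> sets \<mu>\<close> by simp
qed

lemma Prob_eqI_lipschitz:
  fixes \<mu> \<nu> :: "'a::metric_space measure"
  assumes \<mu>: "\<mu> \<in> Prob" and \<nu>: "\<nu> \<in> Prob"
    and eq: "\<And>(f :: 'a \<Rightarrow> real) K. K-lipschitz_on UNIV f \<Longrightarrow> (\<integral>x. f x \<partial>\<mu>) = (\<integral>x. f x \<partial>\<nu>)"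
  shows "\<mu> = \<nu>"
proof -
  interpret M: prob_space \<mu>
    using \<mu> by (rule prob_space_Prob)
  interpret N: prob_space \<nu>
    using \<nu> by (rule prob_space_Prob)
  have "measure \<mu> C = measure \<nu> C" if "closed C" "C \<noteq> {}" for C
  proof (rule LIMSEQ_unique[OF integral_tendsto_measure_closed[OF \<mu> that]])
    have lip: "(real n)-lipschitz_on UNIV (\<lambda>x. max 0 (1 - real n * infdist x C))" for n
    proof (rule lipschitz_onI)
      fix x y
      have "\<bar>infdist x C - infdist y C\<bar> \<le> dist x y"
        by (rule infdist_triangle_abs)
      then have "\<bar>real n * infdist x C - real n * infdist y C\<bar> \<le> real n * dist x y"
        by (simp add: abs_mult right_diff_distrib[symmetric] mult_left_mono)
      then show "dist (max 0 (1 - real n * infdist x C)) (max 0 (1 - real n * infdist y C))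
          \<le> real n * dist x y"
        unfolding dist_real_def by linarith
    qed simp
    have "(\<lambda>n. \<integral>x. max 0 (1 - real n * infdist x C) \<partial>\<mu>) =
        (\<lambda>n. \<integral>x. max 0 (1 - real n * infdist x C) \<partial>\<nu>)"
      using eq[OF lip] by (rule ext)
    then show "(\<lambda>n. \<integral>x. max 0 (1 - real n * infdist x C) \<partial>\<mu>) \<longlonglongrightarrow> measure \<nu> C"
      using integral_tendsto_measure_closed[OF \<nu> that] by simp
  qed
  then have "emeasure \<mu> C = emeasure \<nu> C" if "closed C" for C
    using that by (cases "C = {}") (auto simp: M.emeasure_eq_measure N.emeasure_eq_measure)
  moreover have "sets borel = sigma_sets UNIV (Collect closed :: 'a set set)"
    by (simp add: borel_eq_closed sets_measure_of)
  ultimately show ?thesis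
    using sets_Prob[OF \<mu>] sets_Prob[OF \<nu>]
    by (intro measure_eqI_generator_eq[where E="Collect closed" and \<Omega>=UNIV and A="\<lambda>_. UNIV"])
      (auto simp: Int_stable_def)
qed

lemma Prob_eqI_continuous:
  fixes \<mu> \<nu> :: "'a::metric_space measure"
  assumes "\<mu> \<in> Prob" "\<nu> \<in> Prob"
    and "\<And>f :: 'a \<Rightarrow> real. continuous_on UNIV f \<Longrightarrow> (\<integral>x. f x \<partial>\<mu>) = (\<integral>x. f x \<partial>\<nu>)"
  shows "\<mu> = \<nu>"
  using assms lipschitz_on_continuous_on by (blast intro: Prob_eqI_lipschitz)

lemma Prob_eqI_dMK:
  fixes \<mu> \<nu> :: "'a::metric_space measure"
  assumes "compact (UNIV :: 'a set)" "\<mu> \<in> Prob" "\<nu> \<in> Prob" "dMK \<mu> \<nu> \<le> 0"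
  shows "\<mu> = \<nu>"
proof (rule Prob_eqI_lipschitz[OF assms(2,3)])
  fix f :: "'a \<Rightarrow> real" and K assume f: "K-lipschitz_on UNIV f"
  have "\<bar>(\<integral>x. f x \<partial>\<mu>) - (\<integral>x. f x \<partial>\<nu>)\<bar> \<le> K * dMK \<mu> \<nu>"
    by (rule lipschitz_integral_abs_diff_le_dMK[OF assms(1-3) f])
  also have "\<dots> \<le> 0"
    using assms(4) lipschitz_on_nonneg[OF f] by (simp add: mult_nonneg_nonpos)
  finally show "(\<integral>x. f x \<partial>\<mu>) = (\<integral>x. f x \<partial>\<nu>)"
    by simp
qed

section \<open>Completeness and the contraction principle\<close>

lemma lipschitz_on_mult_compact_UNIV:
  fixes f g :: "'a::metric_space \<Rightarrow> real"
  assumes "compact (UNIV :: 'a set)" and f: "Kf-lipschitz_on UNIV f" and g: "Kg-lipschitz_on UNIV g"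
  obtains K where "K-lipschitz_on UNIV (\<lambda>x. f x * g x)"
proof -
  obtain Bf where Bf: "Bf > 0" "\<And>x. \<bar>f x\<bar> \<le> Bf"
    using compact_UNIV_continuous_bounded[OF assms(1) lipschitz_on_continuous_on[OF f]] by blast
  obtain Bg where Bg: "Bg > 0" "\<And>x. \<bar>g x\<bar> \<le> Bg"
    using compact_UNIV_continuous_bounded[OF assms(1) lipschitz_on_continuous_on[OF g]] by blast
  have "(Bf * Kg + Bg * Kf)-lipschitz_on UNIV (\<lambda>x. f x * g x)"
  proof (rule lipschitz_onI)
    fix x y
    have df: "\<bar>f x - f y\<bar> \<le> Kf * dist x y" and dg: "\<bar>g x - g y\<bar> \<le> Kg * dist x y"
      using lipschitz_onD[OF f, of x y] lipschitz_onD[OF g, of x y] by (simp_all add: dist_real_def)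
    have "dist (f x * g x) (f y * g y) = \<bar>f x * (g x - g y) + g y * (f x - f y)\<bar>"
      by (simp add: dist_real_def algebra_simps)
    also have "\<dots> \<le> \<bar>f x\<bar> * \<bar>g x - g y\<bar> + \<bar>g y\<bar> * \<bar>f x - f y\<bar>"
      by (metis abs_mult abs_triangle_ineq)
    also have "\<dots> \<le> Bf * (Kg * dist x y) + Bg * (Kf * dist x y)"
      using Bf Bg df dg by (intro add_mono mult_mono) auto
    finally show "dist (f x * g x) (f y * g y) \<le> (Bf * Kg + Bg * Kf) * dist x y"
      by (simp add: algebra_simps)
  next
    show "0 \<le> Bf * Kg + Bg * Kf"
      using Bf Bg lipschitz_on_nonneg[OF f] lipschitz_on_nonneg[OF g] by simp
  qed
  then show thesis
    by (rule that)
qed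

text \<open>Stone--Weierstrass: Lipschitz functions form a point-separating algebra.\<close>
lemma continuous_uniform_approx_lipschitz:
  fixes f :: "'a::metric_space \<Rightarrow> real"
  assumes "compact (UNIV :: 'a set)" "continuous_on UNIV f" "e > 0"
  shows "\<exists>g K. K-lipschitz_on UNIV g \<and> (\<forall>x. \<bar>f x - g x\<bar> < e)"
proof -
  define R where "R = {g :: 'a \<Rightarrow> real. \<exists>K. K-lipschitz_on UNIV g}"
  have "function_ring_on R UNIV"
  proof
    show "compact (UNIV :: 'a set)"
      by fact
    fix g h assume "g \<in> R" "h \<in> R"
    then obtain Kg Kh where g: "Kg-lipschitz_on UNIV g" and h: "Kh-lipschitz_on UNIV h"
      unfolding R_def by blast
    show "continuous_on UNIV g"
      using g by (rule lipschitz_on_continuous_on)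
    show "(\<lambda>x. g x + h x) \<in> R"
      unfolding R_def using lipschitz_on_add[OF g h] by blast
    obtain K where "K-lipschitz_on UNIV (\<lambda>x. g x * h x)"
      using lipschitz_on_mult_compact_UNIV[OF assms(1) g h] .
    then show "(\<lambda>x. g x * h x) \<in> R"
      unfolding R_def by blast
  next
    show "(\<lambda>_. c) \<in> R" for c
      unfolding R_def using lipschitz_on_constant by blast
  next
    fix x y :: 'a assume "x \<noteq> y"
    have "1-lipschitz_on UNIV (\<lambda>z. dist x z)"
    proof (rule lipschitz_onI)
      fix a b :: 'a
      have "\<bar>dist a x - dist x b\<bar> \<le> dist a b"
        by (rule abs_dist_diff_le)
      then show "dist (dist x a) (dist x b) \<le> 1 * dist a b"
        by (simp add: dist_real_def dist_commute[of x a])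
    qed simp
    then have "(\<lambda>z. dist x z) \<in> R"
      unfolding R_def by blast
    moreover have "dist x x \<noteq> dist x y"
      using \<open>x \<noteq> y\<close> by simp
    ultimately show "\<exists>g\<in>R. g x \<noteq> g y"
      by blast
  qed
  then obtain g where "g \<in> R" "\<forall>x\<in>UNIV. \<bar>f x - g x\<bar> < e"
    using function_ring_on.Stone_Weierstrass_basic assms(2,3) by blast
  then show ?thesis
    unfolding R_def by blast
qed

lemma convergent_geometric_steps:
  fixes a :: "nat \<Rightarrow> real"
  assumes step: "\<And>k. \<bar>a k - a (Suc k)\<bar> \<le> B * c ^ k" and c: "0 \<le> c" "c < 1"
  shows "\<exists>l. a \<longlonglongrightarrow> l \<and> (\<forall>k. \<bar>a k - l\<bar> \<le> B * c ^ k / (1 - c))"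
proof -
  have B: "0 \<le> B"
    using step[of 0] by simp
  have partial: "\<bar>a k - a m\<bar> \<le> B * (c ^ k - c ^ m) / (1 - c)" if "k \<le> m" for k m
    using that
  proof (induction m rule: dec_induct)
    case (step m)
    have "\<bar>a k - a (Suc m)\<bar> \<le> \<bar>a k - a m\<bar> + \<bar>a m - a (Suc m)\<bar>"
      by linarith
    also have "\<dots> \<le> B * (c ^ k - c ^ m) / (1 - c) + B * c ^ m"
      using step.IH assms(1)[of m] by linarith
    also have "\<dots> = B * (c ^ k - c ^ Suc m) / (1 - c)"
      using c by (simp add: field_simps)
    finally show ?case .
  qed simp
  have tail: "\<bar>a k - a m\<bar> \<le> B * c ^ k / (1 - c)" if "k \<le> m" for k m
    using partial[OF that] B c
    by (smt (verit) divide_right_mono mult_left_mono zero_le_power)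
  have "(\<lambda>k. B * c ^ k / (1 - c)) \<longlonglongrightarrow> 0"
    using c by (auto intro!: tendsto_eq_intros LIMSEQ_power_zero)
  have "Cauchy a"
  proof (rule CauchyI)
    fix e :: real assume "0 < e"
    then obtain M where M: "B * c ^ M / (1 - c) < e / 2"
      using \<open>(\<lambda>k. B * c ^ k / (1 - c)) \<longlonglongrightarrow> 0\<close> by (metis half_gt_zero LIMSEQ_D abs_less_iff le_refl
          real_norm_def diff_zero)
    show "\<exists>M. \<forall>m\<ge>M. \<forall>n\<ge>M. norm (a m - a n) < e"
    proof (intro exI allI impI)
      fix m n assume "M \<le> m" "M \<le> n"
      then show "norm (a m - a n) < e"
        using tail[of M m] tail[of M n] M unfolding real_norm_def by linarith
    qed
  qed
  then obtain l where l: "a \<longlonglongrightarrow> l"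
    by (auto simp: Cauchy_convergent_iff convergent_def)
  moreover have "\<bar>a k - l\<bar> \<le> B * c ^ k / (1 - c)" for k
    using tail[of k] by (intro LIMSEQ_le_const2[OF tendsto_rabs[OF tendsto_diff[OF tendsto_const l]]])
      auto
  ultimately show ?thesis
    by blast
qed

lemma convergent_integrals_if_lipschitz:
  fixes m :: "nat \<Rightarrow> 'a::metric_space measure" and f :: "'a \<Rightarrow> real"
  assumes cpt: "compact (UNIV :: 'a set)" and m: "\<And>k. m k \<in> Prob"
    and lip: "\<And>(g :: 'a \<Rightarrow> real) K. K-lipschitz_on UNIV g \<Longrightarrow> convergent (\<lambda>k. \<integral>x. g x \<partial>m k)"
    and f: "continuous_on UNIV f"
  shows "convergent (\<lambda>k. \<integral>x. f x \<partial>m k)"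
  unfolding Cauchy_convergent_iff[symmetric]
proof (rule CauchyI)
  fix e :: real assume "0 < e"
  then have "e / 3 > 0"
    by simp
  then obtain g K where g: "K-lipschitz_on UNIV g" and fg: "\<And>x. \<bar>f x - g x\<bar> < e / 3"
    using continuous_uniform_approx_lipschitz[OF cpt f] by blast
  have close: "\<bar>(\<integral>x. f x \<partial>m k) - (\<integral>x. g x \<partial>m k)\<bar> \<le> e / 3" for k
    using fg by (intro integral_Prob_abs_diff_le[OF cpt m f lipschitz_on_continuous_on[OF g]] less_imp_le)
  have "Cauchy (\<lambda>k. \<integral>x. g x \<partial>m k)"
    using lip[OF g] by (simp add: Cauchy_convergent_iff)
  then obtain M where M: "\<And>i j. M \<le> i \<Longrightarrow> M \<le> j \<Longrightarrow>
      norm ((\<integral>x. g x \<partial>m i) - (\<integral>x. g x \<partial>m j)) < e / 3"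
    using CauchyD[of _ "e / 3"] \<open>0 < e\<close> by (metis zero_less_divide_iff zero_less_numeral)
  show "\<exists>M. \<forall>i\<ge>M. \<forall>j\<ge>M. norm ((\<integral>x. f x \<partial>m i) - (\<integral>x. f x \<partial>m j)) < e"
  proof (intro exI allI impI)
    fix i j assume "M \<le> i" "M \<le> j"
    then show "norm ((\<integral>x. f x \<partial>m i) - (\<integral>x. f x \<partial>m j)) < e"
      using M[of i j] close[of i] close[of j] unfolding real_norm_def by linarith
  qed
qed

lemma normalized_positive_functional_lim_integrals:
  fixes m :: "nat \<Rightarrow> 'a::metric_space measure"
  assumes cpt: "compact (UNIV :: 'a set)" and m: "\<And>k. m k \<in> Prob"
    and conv: "\<And>f :: 'a \<Rightarrow> real. continuous_on UNIV f \<Longrightarrow> convergent (\<lambda>k. \<integral>x. f x \<partial>m k)"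
  shows "normalized_positive_functional (\<lambda>f :: 'a \<Rightarrow> real. lim (\<lambda>k. \<integral>x. f x \<partial>m k))"
    (is "normalized_positive_functional ?\<Lambda>")
proof
  have lim: "(\<lambda>k. \<integral>x. f x \<partial>m k) \<longlonglongrightarrow> ?\<Lambda> f" if "continuous_on UNIV f" for f
    using conv[OF that] by (simp add: convergent_LIMSEQ_iff)
  have int: "integrable (m k) f" if "continuous_on UNIV f" for f :: "'a \<Rightarrow> real" and k
    using integrable_Prob[OF cpt m that] .
  show "compact (UNIV :: 'a set)"
    by (rule cpt)
  show "?\<Lambda> (\<lambda>x. f x + g x) = ?\<Lambda> f + ?\<Lambda> g"
    if fg: "continuous_on UNIV f" "continuous_on UNIV g" for f g
  proof (rule LIMSEQ_unique)
    show "(\<lambda>k. \<integral>x. f x + g x \<partial>m k) \<longlonglongrightarrow> ?\<Lambda> (\<lambda>x. f x + g x)"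
      using fg by (intro lim continuous_on_add)
    show "(\<lambda>k. \<integral>x. f x + g x \<partial>m k) \<longlonglongrightarrow> ?\<Lambda> f + ?\<Lambda> g"
      using int fg by (simp add: tendsto_add lim)
  qed
  show "?\<Lambda> (\<lambda>x. c * f x) = c * ?\<Lambda> f" if f: "continuous_on UNIV f" for f c
  proof (rule LIMSEQ_unique)
    show "(\<lambda>k. \<integral>x. c * f x \<partial>m k) \<longlonglongrightarrow> ?\<Lambda> (\<lambda>x. c * f x)"
      using f by (intro lim continuous_on_mult_left)
    show "(\<lambda>k. \<integral>x. c * f x \<partial>m k) \<longlonglongrightarrow> c * ?\<Lambda> f"
      using f by (simp add: tendsto_mult_left lim)
  qed
  show "?\<Lambda> f \<le> ?\<Lambda> g"
    if fg: "continuous_on UNIV f" "continuous_on UNIV g" "\<And>x. f x \<le> g x" for f g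
  proof -
    have "(\<integral>x. f x \<partial>m k) \<le> (\<integral>x. g x \<partial>m k)" for k
      using fg by (intro integral_mono int) auto
    then show ?thesis
      using fg by (intro LIMSEQ_le[OF lim lim]) auto
  qed
  have "(\<lambda>k. \<integral>x. 1 \<partial>m k) = (\<lambda>k. 1::real)"
    by (intro ext integral_const_Prob m)
  then show "?\<Lambda> (\<lambda>x. 1) = 1"
    by simp
qed

lemma Prob_weak_limit:
  fixes m :: "nat \<Rightarrow> 'a::metric_space measure"
  assumes cpt: "compact (UNIV :: 'a set)" and m: "\<And>k. m k \<in> Prob"
    and conv: "\<And>f :: 'a \<Rightarrow> real. continuous_on UNIV f \<Longrightarrow> convergent (\<lambda>k. \<integral>x. f x \<partial>m k)"
  obtains \<mu> where "\<mu> \<in> Prob"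
    "\<And>f :: 'a \<Rightarrow> real. continuous_on UNIV f \<Longrightarrow> (\<lambda>k. \<integral>x. f x \<partial>m k) \<longlonglongrightarrow> (\<integral>x. f x \<partial>\<mu>)"
proof -
  have "normalized_positive_functional (\<lambda>f :: 'a \<Rightarrow> real. lim (\<lambda>k. \<integral>x. f x \<partial>m k))"
    using cpt m conv by (rule normalized_positive_functional_lim_integrals)
  then obtain \<mu> where \<mu>: "\<mu> \<in> Prob"
    and lim: "\<And>f :: 'a \<Rightarrow> real. continuous_on UNIV f \<Longrightarrow> (\<integral>x. f x \<partial>\<mu>) = lim (\<lambda>k. \<integral>x. f x \<partial>m k)"
    using riesz_representation by blast
  show thesis
  proof (rule that[OF \<mu>])
    fix f :: "'a \<Rightarrow> real" assume "continuous_on UNIV f"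
    then show "(\<lambda>k. \<integral>x. f x \<partial>m k) \<longlonglongrightarrow> (\<integral>x. f x \<partial>\<mu>)"
      using conv lim by (simp add: convergent_LIMSEQ_iff)
  qed
qed

lemma Prob_dMK_geometric_limit:
  fixes m :: "nat \<Rightarrow> 'a::metric_space measure"
  assumes cpt: "compact (UNIV :: 'a set)" and m: "\<And>k. m k \<in> Prob"
    and step: "\<And>k. dMK (m k) (m (Suc k)) \<le> D * c ^ k" and c: "0 \<le> c" "c < 1"
  obtains \<mu> where "\<mu> \<in> Prob" "\<And>k. dMK (m k) \<mu> \<le> D * c ^ k / (1 - c)"
proof -
  have lip: "\<exists>l. (\<lambda>k. \<integral>x. g x \<partial>m k) \<longlonglongrightarrow> l \<and>
      (\<forall>k. \<bar>(\<integral>x. g x \<partial>m k) - l\<bar> \<le> (K * D) * c ^ k / (1 - c))"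
    if g: "K-lipschitz_on UNIV g" for g :: "'a \<Rightarrow> real" and K
  proof -
    have "\<bar>(\<integral>x. g x \<partial>m k) - (\<integral>x. g x \<partial>m (Suc k))\<bar> \<le> (K * D) * c ^ k" for k
    proof -
      have "\<bar>(\<integral>x. g x \<partial>m k) - (\<integral>x. g x \<partial>m (Suc k))\<bar> \<le> K * dMK (m k) (m (Suc k))"
        by (rule lipschitz_integral_abs_diff_le_dMK[OF cpt m m g])
      also have "\<dots> \<le> K * (D * c ^ k)"
        using step[of k] lipschitz_on_nonneg[OF g] by (rule mult_left_mono)
      finally show ?thesis
        by (simp add: mult.assoc)
    qed
    then show ?thesis
      using c by (rule convergent_geometric_steps)
  qed
  have conv: "convergent (\<lambda>k. \<integral>x. f x \<partial>m k)" if "continuous_on UNIV f" for f :: "'a \<Rightarrow> real"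
  proof (rule convergent_integrals_if_lipschitz[OF cpt m _ that])
    fix g :: "'a \<Rightarrow> real" and K assume "K-lipschitz_on UNIV g"
    then show "convergent (\<lambda>k. \<integral>x. g x \<partial>m k)"
      using lip unfolding convergent_def by blast
  qed
  obtain \<mu> where \<mu>: "\<mu> \<in> Prob"
    and lim: "\<And>f :: 'a \<Rightarrow> real. continuous_on UNIV f \<Longrightarrow> (\<lambda>k. \<integral>x. f x \<partial>m k) \<longlonglongrightarrow> (\<integral>x. f x \<partial>\<mu>)"
    using Prob_weak_limit[OF cpt m conv] by blast
  have "dMK (m k) \<mu> \<le> D * c ^ k / (1 - c)" for k
  proof (rule dMK_le)
    fix f :: "'a \<Rightarrow> real" assume f: "1-lipschitz_on UNIV f"
    obtain l where l: "(\<lambda>k. \<integral>x. f x \<partial>m k) \<longlonglongrightarrow> l"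
      "\<bar>(\<integral>x. f x \<partial>m k) - l\<bar> \<le> (1 * D) * c ^ k / (1 - c)"
      using lip[OF f] by blast
    have "l = (\<integral>x. f x \<partial>\<mu>)"
      using LIMSEQ_unique[OF l(1) lim[OF lipschitz_on_continuous_on[OF f]]] .
    with l(2) show "(\<integral>x. f x \<partial>m k) - (\<integral>x. f x \<partial>\<mu>) \<le> D * c ^ k / (1 - c)"
      by simp
  qed
  with \<mu> show thesis
    by (rule that)
qed

lemma funpow_Prob:
  fixes T :: "'a::metric_space measure \<Rightarrow> 'a measure"
  assumes "\<And>\<mu>. \<mu> \<in> Prob \<Longrightarrow> T \<mu> \<in> Prob" "\<mu> \<in> Prob"
  shows "(T ^^ k) \<mu> \<in> Prob"
  using assms by (induction k) auto

lemma dMK_contraction_funpow: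
  fixes T :: "'a::metric_space measure \<Rightarrow> 'a measure"
  assumes T: "\<And>\<mu>. \<mu> \<in> Prob \<Longrightarrow> T \<mu> \<in> Prob"
    and contr: "\<And>\<mu> \<nu>. \<mu> \<in> Prob \<Longrightarrow> \<nu> \<in> Prob \<Longrightarrow> dMK (T \<mu>) (T \<nu>) \<le> c * dMK \<mu> \<nu>"
    and "0 \<le> c" "\<mu> \<in> Prob" "\<nu> \<in> Prob"
  shows "dMK ((T ^^ k) \<mu>) ((T ^^ k) \<nu>) \<le> c ^ k * dMK \<mu> \<nu>"
proof (induction k)
  case (Suc k)
  have "dMK ((T ^^ Suc k) \<mu>) ((T ^^ Suc k) \<nu>) \<le> c * dMK ((T ^^ k) \<mu>) ((T ^^ k) \<nu>)"
    using contr[OF funpow_Prob[OF T assms(4)] funpow_Prob[OF T assms(5)]] by simp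
  also have "\<dots> \<le> c * (c ^ k * dMK \<mu> \<nu>)"
    using Suc \<open>0 \<le> c\<close> by (rule mult_left_mono)
  finally show ?case
    by simp
qed simp

lemma dMK_contraction_has_fixed_point:
  fixes T :: "'a::metric_space measure \<Rightarrow> 'a measure"
  assumes cpt: "compact (UNIV :: 'a set)" and T: "\<And>\<mu>. \<mu> \<in> Prob \<Longrightarrow> T \<mu> \<in> Prob"
    and contr: "\<And>\<mu> \<nu>. \<mu> \<in> Prob \<Longrightarrow> \<nu> \<in> Prob \<Longrightarrow> dMK (T \<mu>) (T \<nu>) \<le> c * dMK \<mu> \<nu>"
    and c: "0 \<le> c" "c < 1"
  obtains \<mu>R where "\<mu>R \<in> Prob" "T \<mu>R = \<mu>R"
proof -
  define \<mu>0 :: "'a measure" where "\<mu>0 = return borel undefined"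
  have \<mu>0: "\<mu>0 \<in> Prob"
    unfolding \<mu>0_def Prob_def by (auto intro: prob_space_return)
  define m where "m k = (T ^^ k) \<mu>0" for k
  have m: "m k \<in> Prob" for k
    unfolding m_def using T \<mu>0 by (rule funpow_Prob)
  define D where "D = dMK \<mu>0 (T \<mu>0)"
  have step: "dMK (m k) (m (Suc k)) \<le> D * c ^ k" for k
    using dMK_contraction_funpow[OF T contr c(1) \<mu>0 T[OF \<mu>0], of k]
    unfolding m_def D_def funpow_Suc_right by (simp add: mult.commute)
  obtain \<mu>R where \<mu>R: "\<mu>R \<in> Prob" and rate: "\<And>k. dMK (m k) \<mu>R \<le> D * c ^ k / (1 - c)"
    using Prob_dMK_geometric_limit[where m=m, OF cpt m step c] by blast
  have "dMK (T \<mu>R) \<mu>R \<le> 2 * (D * c ^ Suc k / (1 - c))" for k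
  proof -
    have "dMK (T \<mu>R) \<mu>R \<le> dMK (T \<mu>R) (T (m k)) + dMK (m (Suc k)) \<mu>R"
      using dMK_triangle[OF cpt T[OF \<mu>R] \<mu>R T[OF m]] by (simp add: m_def)
    moreover have "dMK (T \<mu>R) (T (m k)) \<le> c * dMK (m k) \<mu>R"
      using contr[OF \<mu>R m] dMK_sym[OF cpt \<mu>R m] by simp
    moreover have "c * dMK (m k) \<mu>R \<le> D * c ^ Suc k / (1 - c)"
      using mult_left_mono[OF rate[of k] c(1)] by (simp add: mult.left_commute)
    ultimately show ?thesis
      using rate[of "Suc k"] by linarith
  qed
  moreover have "(\<lambda>k. 2 * (D * c ^ Suc k / (1 - c))) \<longlonglongrightarrow> 2 * (D * 0 / (1 - c))"
    using c by (intro tendsto_intros LIMSEQ_Suc[OF LIMSEQ_power_zero]) auto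
  ultimately have "dMK (T \<mu>R) \<mu>R \<le> 0"
    by (intro LIMSEQ_le_const[where a="dMK (T \<mu>R) \<mu>R"]) auto
  then have "T \<mu>R = \<mu>R"
    by (rule Prob_eqI_dMK[OF cpt T[OF \<mu>R] \<mu>R])
  with \<mu>R show thesis
    by (rule that)
qed

lemma dMK_contraction_fixed_point:
  fixes T :: "'a::metric_space measure \<Rightarrow> 'a measure"
  assumes cpt: "compact (UNIV :: 'a set)" and T: "\<And>\<mu>. \<mu> \<in> Prob \<Longrightarrow> T \<mu> \<in> Prob"
    and contr: "\<And>\<mu> \<nu>. \<mu> \<in> Prob \<Longrightarrow> \<nu> \<in> Prob \<Longrightarrow> dMK (T \<mu>) (T \<nu>) \<le> c * dMK \<mu> \<nu>"
    and c: "0 \<le> c" "c < 1"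
  obtains \<mu>R where "\<mu>R \<in> Prob" "T \<mu>R = \<mu>R"
    "\<And>\<nu>. \<nu> \<in> Prob \<Longrightarrow> T \<nu> = \<nu> \<Longrightarrow> \<nu> = \<mu>R"
    "\<And>\<mu> k. \<mu> \<in> Prob \<Longrightarrow> dMK ((T ^^ k) \<mu>) \<mu>R \<le> dMK \<mu> \<mu>R * c ^ k"
proof -
  obtain \<mu>R where \<mu>R: "\<mu>R \<in> Prob" and fixed: "T \<mu>R = \<mu>R"
    using dMK_contraction_has_fixed_point[OF cpt T contr c] by blast
  have unique: "\<nu> = \<mu>R" if \<nu>: "\<nu> \<in> Prob" "T \<nu> = \<nu>" for \<nu>
  proof (rule Prob_eqI_dMK[OF cpt \<nu>(1) \<mu>R])
    have "dMK \<nu> \<mu>R \<le> c * dMK \<nu> \<mu>R"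
      using contr[OF \<nu>(1) \<mu>R] \<nu>(2) fixed by simp
    then have "(1 - c) * dMK \<nu> \<mu>R \<le> 0"
      by (simp add: algebra_simps)
    then show "dMK \<nu> \<mu>R \<le> 0"
      using c by (simp add: mult_le_0_iff)
  qed
  have "dMK ((T ^^ k) \<mu>) \<mu>R \<le> dMK \<mu> \<mu>R * c ^ k" if "\<mu> \<in> Prob" for \<mu> k
  proof -
    have "(T ^^ k) \<mu>R = \<mu>R"
      using fixed by (induction k) simp_all
    then show ?thesis
      using dMK_contraction_funpow[OF T contr c(1) that \<mu>R, of k] by (simp add: mult.commute)
  qed
  with \<mu>R fixed unique show thesis
    by (rule that)
qed

section \<open>The Markov operator\<close>

locale markov_system =
  fixes \<tau> :: "'b::metric_space \<Rightarrow> 'a::metric_space \<Rightarrow> 'a"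
    and q :: "'a \<Rightarrow> 'b measure"
  assumes X_compact: "compact (UNIV :: 'a set)"
    and L_compact: "compact (UNIV :: 'b set)"
    and tau_cont: "continuous_on UNIV (\<lambda>(l, x). \<tau> l x)"
    and q_prob: "\<And>x. q x \<in> Prob"
    and q_cont: "\<And>g :: 'b \<Rightarrow> real. continuous_on UNIV g \<Longrightarrow>
                   continuous_on UNIV (\<lambda>x. \<integral>l. g l \<partial>(q x))"
begin

definition transfer :: "('a \<Rightarrow> real) \<Rightarrow> 'a \<Rightarrow> real" where
  "transfer f x = (\<integral>l. f (\<tau> l x) \<partial>(q x))"

lemma continuous_on_compose_tau:
  assumes "continuous_on UNIV f"
  shows "continuous_on UNIV (\<lambda>l. f (\<tau> l x))"
proof -
  have "continuous_on UNIV (\<lambda>l. (\<lambda>(l, x). \<tau> l x) (l, x))"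
    by (rule continuous_on_compose2[OF tau_cont]) (auto intro: continuous_intros)
  then show ?thesis
    using continuous_on_compose2[OF assms] by fastforce
qed

lemma integrable_transfer_integrand:
  fixes f :: "'a \<Rightarrow> real"
  assumes "continuous_on UNIV f"
  shows "integrable (q y) (\<lambda>l. f (\<tau> l x))"
  by (rule integrable_Prob[OF L_compact q_prob continuous_on_compose_tau[OF assms]])

text \<open>Uniform continuity of \<open>(l, x) \<mapsto> f (\<tau> l x)\<close> on the compact \<open>\<Lambda> \<times> X\<close> moves the
  integrand from \<open>x\<close> to \<open>x0\<close>; continuity of \<open>q\<close> moves the measure from \<open>q x\<close> to \<open>q x0\<close>.\<close>
lemma continuous_on_transfer:
  assumes f: "continuous_on UNIV f"
  shows "continuous_on UNIV (transfer f)"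
  unfolding continuous_on_iff
proof (intro ballI allI impI)
  fix x0 :: 'a and e :: real assume "0 < e"
  have "continuous_on UNIV (\<lambda>(l, x). f (\<tau> l x))"
    using continuous_on_compose2[OF f tau_cont] by (simp add: case_prod_beta)
  then have "uniformly_continuous_on UNIV (\<lambda>(l, x). f (\<tau> l x))"
    using compact_uniformly_continuous compact_Times[OF L_compact X_compact] by fastforce
  then obtain d1 where d1: "d1 > 0"
    and close: "\<And>z z'. dist z' z < d1 \<Longrightarrow> dist ((\<lambda>(l, x). f (\<tau> l x)) z') ((\<lambda>(l, x). f (\<tau> l x)) z) < e / 2"
    unfolding uniformly_continuous_on_def using \<open>0 < e\<close> by (metis UNIV_I half_gt_zero)
  define G where "G x = (\<integral>l. f (\<tau> l x0) \<partial>(q x))" for x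
  have "continuous_on UNIV G"
    unfolding G_def by (intro q_cont continuous_on_compose_tau f)
  then obtain d2 where d2: "d2 > 0" "\<And>x. dist x x0 < d2 \<Longrightarrow> dist (G x) (G x0) < e / 2"
    unfolding continuous_on_iff using \<open>0 < e\<close> by (metis UNIV_I half_gt_zero)
  show "\<exists>d>0. \<forall>x\<in>UNIV. dist x x0 < d \<longrightarrow> dist (transfer f x) (transfer f x0) < e"
  proof (intro exI[of _ "min d1 d2"] conjI ballI impI)
    fix x assume "dist x x0 < min d1 d2"
    then have near: "dist (l, x) (l, x0) < d1" for l
      by (simp add: dist_Pair_Pair)
    have "\<bar>f (\<tau> l x) - f (\<tau> l x0)\<bar> < e / 2" for l
      using close[OF near[of l]] by (simp add: dist_real_def)
    then have "\<bar>f (\<tau> l x) - f (\<tau> l x0)\<bar> \<le> e / 2" for l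
      by (rule less_imp_le)
    then have "\<bar>transfer f x - G x\<bar> \<le> e / 2"
      unfolding transfer_def G_def
      by (intro integral_Prob_abs_diff_le[OF L_compact q_prob] continuous_on_compose_tau f)
    moreover have "\<bar>G x - G x0\<bar> < e / 2"
      using d2(2) \<open>dist x x0 < min d1 d2\<close> by (simp add: dist_real_def)
    moreover have "G x0 = transfer f x0"
      unfolding G_def transfer_def by simp
    ultimately show "dist (transfer f x) (transfer f x0) < e"
      unfolding dist_real_def by linarith
  qed (use d1 d2 in simp)
qed

lemma integrable_transfer_Prob:
  "\<mu> \<in> Prob \<Longrightarrow> continuous_on UNIV f \<Longrightarrow> integrable \<mu> (transfer f)"
  by (rule integrable_Prob[OF X_compact _ continuous_on_transfer])

lemma transfer_add:
  "continuous_on UNIV f \<Longrightarrow> continuous_on UNIV g \<Longrightarrow>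
    transfer (\<lambda>x. f x + g x) x = transfer f x + transfer g x"
  unfolding transfer_def by (intro Bochner_Integration.integral_add integrable_transfer_integrand)

lemma transfer_mono:
  "continuous_on UNIV f \<Longrightarrow> continuous_on UNIV g \<Longrightarrow> (\<And>x. f x \<le> g x) \<Longrightarrow>
    transfer f x \<le> transfer g x"
  unfolding transfer_def by (intro integral_mono integrable_transfer_integrand)

lemma transfer_const: "transfer (\<lambda>x. c) x = c"
  unfolding transfer_def by (rule integral_const_Prob[OF q_prob])

lemma normalized_positive_functional_transfer:
  assumes \<mu>: "\<mu> \<in> Prob"
  shows "normalized_positive_functional (\<lambda>f. \<integral>x. transfer f x \<partial>\<mu>)"
proof
  fix f g :: "'a \<Rightarrow> real" assume "continuous_on UNIV f" "continuous_on UNIV g"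
  then show "(\<integral>x. transfer (\<lambda>x. f x + g x) x \<partial>\<mu>) = (\<integral>x. transfer f x \<partial>\<mu>) + (\<integral>x. transfer g x \<partial>\<mu>)"
    by (simp add: transfer_add integrable_transfer_Prob[OF \<mu>])
next
  fix f g :: "'a \<Rightarrow> real" assume "continuous_on UNIV f" "continuous_on UNIV g" "\<And>x. f x \<le> g x"
  then show "(\<integral>x. transfer f x \<partial>\<mu>) \<le> (\<integral>x. transfer g x \<partial>\<mu>)"
    by (intro integral_mono transfer_mono integrable_transfer_Prob[OF \<mu>])
next
  show "(\<integral>x. transfer (\<lambda>x. 1) x \<partial>\<mu>) = 1"
    using integral_const_Prob[OF \<mu>, of 1] by (simp only: transfer_const)
qed (simp_all add: X_compact transfer_def)

lemma
  assumes \<mu>: "\<mu> \<in> Prob"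
  shows Tq_in_Prob: "Tq q \<tau> \<mu> \<in> Prob"
    and integral_Tq: "\<And>f. continuous_on UNIV f \<Longrightarrow> (\<integral>x. f x \<partial>Tq q \<tau> \<mu>) = (\<integral>x. transfer f x \<partial>\<mu>)"
proof -
  obtain \<nu> where \<nu>: "\<nu> \<in> Prob"
    and \<nu>_int: "\<And>f. continuous_on UNIV f \<Longrightarrow> (\<integral>x. f x \<partial>\<nu>) = (\<integral>x. transfer f x \<partial>\<mu>)"
    using riesz_representation[OF normalized_positive_functional_transfer[OF \<mu>]] by blast
  have "Tq q \<tau> \<mu> = \<nu>"
    unfolding Tq_def
  proof (rule the_equality)
    fix \<nu>' assume "\<nu>' \<in> Prob \<and> (\<forall>f :: 'a \<Rightarrow> real. continuous_on UNIV f \<longrightarrow>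
        (\<integral>x. f x \<partial>\<nu>') = (\<integral>x. (\<integral>l. f (\<tau> l x) \<partial>(q x)) \<partial>\<mu>))"
    then show "\<nu>' = \<nu>"
      using \<nu> \<nu>_int by (intro Prob_eqI_continuous) (auto simp: transfer_def)
  qed (use \<nu> \<nu>_int in \<open>simp add: transfer_def\<close>)
  then show "Tq q \<tau> \<mu> \<in> Prob" "\<And>f. continuous_on UNIV f \<Longrightarrow> (\<integral>x. f x \<partial>Tq q \<tau> \<mu>) = (\<integral>x. transfer f x \<partial>\<mu>)"
    using \<nu> \<nu>_int by simp_all
qed

lemma Tq_dMK_contraction:
  assumes lip: "\<And>f. 1-lipschitz_on UNIV f \<Longrightarrow> c-lipschitz_on UNIV (transfer f)"
    and \<mu>: "\<mu> \<in> Prob" and \<nu>: "\<nu> \<in> Prob"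
  shows "dMK (Tq q \<tau> \<mu>) (Tq q \<tau> \<nu>) \<le> c * dMK \<mu> \<nu>"
proof (rule dMK_le)
  fix f :: "'a \<Rightarrow> real" assume f: "1-lipschitz_on UNIV f"
  then show "(\<integral>x. f x \<partial>Tq q \<tau> \<mu>) - (\<integral>x. f x \<partial>Tq q \<tau> \<nu>) \<le> c * dMK \<mu> \<nu>"
    using lipschitz_integral_diff_le_dMK[OF X_compact \<mu> \<nu> lip[OF f]]
    by (simp add: integral_Tq \<mu> \<nu> lipschitz_on_continuous_on)
qed

text \<open>For \<open>f \<in> Lip\<^sub>1\<close> split \<open>transfer f x - transfer f y\<close> into the integral of
  \<open>f (\<tau> l x) - f (\<tau> l y)\<close> against \<open>q x\<close>, bounded by (M1), and the difference of the integrals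
  of \<open>l \<mapsto> f (\<tau> l y)\<close> against \<open>q x\<close> and \<open>q y\<close>; by (H2) this integrand is \<open>r\<close>-Lipschitz,
  so (H3) bounds the second term by \<open>r t d(x, y)\<close>.\<close>
lemma lipschitz_on_transfer:
  assumes M1: "\<And>x y (f :: 'a \<Rightarrow> real). 1-lipschitz_on UNIV f \<Longrightarrow>
         (\<integral>l. \<bar>f (\<tau> l x) - f (\<tau> l y)\<bar> \<partial>(q x)) \<le> s * dist x y"
    and H2: "r \<ge> 0" "\<And>l1 l2 x. dist (\<tau> l1 x) (\<tau> l2 x) \<le> r * dist l1 l2"
    and H3: "\<And>x y. dMK (q x) (q y) \<le> t * dist x y"
    and nonneg: "0 \<le> s + r * t"
    and f: "1-lipschitz_on UNIV f"
  shows "(s + r * t)-lipschitz_on UNIV (transfer f)"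
proof -
  have fc: "continuous_on UNIV f"
    using f by (rule lipschitz_on_continuous_on)
  have one_sided: "transfer f x - transfer f y \<le> (s + r * t) * dist x y" for x y
  proof -
    have "r-lipschitz_on UNIV (\<lambda>l. f (\<tau> l y))"
    proof (rule lipschitz_onI)
      fix l1 l2
      have "dist (f (\<tau> l1 y)) (f (\<tau> l2 y)) \<le> 1 * dist (\<tau> l1 y) (\<tau> l2 y)"
        by (rule lipschitz_onD[OF f]) auto
      also have "\<dots> \<le> r * dist l1 l2"
        using H2(2) by simp
      finally show "dist (f (\<tau> l1 y)) (f (\<tau> l2 y)) \<le> r * dist l1 l2" .
    qed (rule H2(1))
    then have "(\<integral>l. f (\<tau> l y) \<partial>(q x)) - (\<integral>l. f (\<tau> l y) \<partial>(q y)) \<le> r * dMK (q x) (q y)"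
      by (rule lipschitz_integral_diff_le_dMK[OF L_compact q_prob q_prob])
    also have "\<dots> \<le> r * (t * dist x y)"
      using H3 H2(1) by (rule mult_left_mono)
    finally have second: "(\<integral>l. f (\<tau> l y) \<partial>(q x)) - (\<integral>l. f (\<tau> l y) \<partial>(q y)) \<le> r * (t * dist x y)" .
    have "(\<integral>l. f (\<tau> l x) \<partial>(q x)) - (\<integral>l. f (\<tau> l y) \<partial>(q x)) = (\<integral>l. f (\<tau> l x) - f (\<tau> l y) \<partial>(q x))"
      using integrable_transfer_integrand[OF fc] by simp
    also have "\<dots> \<le> (\<integral>l. \<bar>f (\<tau> l x) - f (\<tau> l y)\<bar> \<partial>(q x))"
      using integrable_transfer_integrand[OF fc] by (intro integral_mono) auto
    also have "\<dots> \<le> s * dist x y"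
      by (rule M1[OF f])
    finally show ?thesis
      using second unfolding transfer_def by (simp add: algebra_simps)
  qed
  show ?thesis
  proof (rule lipschitz_onI)
    fix x y
    show "dist (transfer f x) (transfer f y) \<le> (s + r * t) * dist x y"
      using one_sided[of x y] one_sided[of y x] by (simp add: dist_real_def dist_commute abs_le_iff)
  qed (rule nonneg)
qed

end

theorem mainTheorem7:
  fixes \<tau> :: "'b::metric_space \<Rightarrow> 'a::metric_space \<Rightarrow> 'a"
    and q :: "'a \<Rightarrow> 'b measure"
    and s r t :: real
  assumes X_compact: "compact (UNIV :: 'a set)"
    and L_compact: "compact (UNIV :: 'b set)"
    and tau_cont: "continuous_on UNIV (\<lambda>(l, x). \<tau> l x)"
    and q_prob: "\<And>x. q x \<in> Prob"
    and q_cont: "\<And>g :: 'b \<Rightarrow> real. continuous_on UNIV g \<Longrightarrow>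
                   continuous_on UNIV (\<lambda>x. \<integral>l. g l \<partial>(q x))"
    and M1: "s > 0"
      "\<And>x y (f :: 'a \<Rightarrow> real). 1-lipschitz_on UNIV f \<Longrightarrow>
         (\<integral>l. \<bar>f (\<tau> l x) - f (\<tau> l y)\<bar> \<partial>(q x)) \<le> s * dist x y"
    and H2: "r \<ge> 0" "\<And>l1 l2 x. dist (\<tau> l1 x) (\<tau> l2 x) \<le> r * dist l1 l2"
    and H3: "t \<ge> 0" "\<And>x y. dMK (q x) (q y) \<le> t * dist x y"
    and contr: "s + r * t < 1"
  shows "\<exists>\<mu>R. \<mu>R \<in> Prob \<and> Tq q \<tau> \<mu>R = \<mu>R \<and>
           (\<forall>\<nu> \<in> Prob. Tq q \<tau> \<nu> = \<nu> \<longrightarrow> \<nu> = \<mu>R) \<and>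
           (\<forall>\<mu>0 \<in> Prob. \<exists>C \<rho>. 0 \<le> C \<and> 0 \<le> \<rho> \<and> \<rho> < 1 \<and>
              (\<forall>k. dMK ((Tq q \<tau> ^^ k) \<mu>0) \<mu>R \<le> C * \<rho> ^ k))"
proof -
  interpret markov_system \<tau> q
    using X_compact L_compact tau_cont q_prob q_cont by unfold_locales
  have c: "0 \<le> s + r * t" "s + r * t < 1"
    using M1(1) H2(1) H3(1) contr by simp_all
  have "(s + r * t)-lipschitz_on UNIV (transfer f)" if "1-lipschitz_on UNIV f" for f
    using lipschitz_on_transfer[OF M1(2) H2 H3(2) c(1) that] .
  then have contraction: "dMK (Tq q \<tau> \<mu>) (Tq q \<tau> \<nu>) \<le> (s + r * t) * dMK \<mu> \<nu>"
    if "\<mu> \<in> Prob" "\<nu> \<in> Prob" for \<mu> \<nu>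
    using Tq_dMK_contraction that by blast
  obtain \<mu>R where "\<mu>R \<in> Prob" "Tq q \<tau> \<mu>R = \<mu>R"
    "\<And>\<nu>. \<nu> \<in> Prob \<Longrightarrow> Tq q \<tau> \<nu> = \<nu> \<Longrightarrow> \<nu> = \<mu>R"
    "\<And>\<mu> k. \<mu> \<in> Prob \<Longrightarrow> dMK ((Tq q \<tau> ^^ k) \<mu>) \<mu>R \<le> dMK \<mu> \<mu>R * (s + r * t) ^ k"
    using dMK_contraction_fixed_point[where T="Tq q \<tau>", OF X_compact Tq_in_Prob contraction c]
    by blast
  then show ?thesis
    using dMK_nonneg[OF X_compact] c by blast
qed

end
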